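(* If a voting method $F$ satisfies ordinal margin invariance and single-voter resolvability (respectively, asymptotic resolvability), then $|F(\mathbf{P})|=1$ for every profile $\mathbf{P}$ whose ordinal margin graph is a linearly edge-ordered tournament.
   Context: Fix infinite sets $\mathcal{X}$ (alternatives) and $\mathcal{V}$ (voters). A profile $\mathbf{P}$ is a function from a nonempty finite set $V(\mathbf{P})\subseteq\mathcal{V}$ to the set of strict weak orders on a nonempty finite set $X(\mathbf{P})\subseteq\mathcal{X}$; $(x,y)\in\mathbf{P}(i)$ means voter $i$ strictly prefers $x$ to $y$. $\mathbf{P}$ is linear if every $\mathbf{P}(i)$ is a linear order. $\mathrm{Support}_\mathbf{P}(a,b)=|\{i\in V(\mathbf{P}) : (a,b)\in\mathbf{P}(i)\}|$, $\mathrm{Margin}_\mathbf{P}(x,y)=\mathrm{Support}_\mathbf{P}(x,y)-\mathrm{Support}_\mathbf{P}(y,x)$. A voting method is a function $F$ assigning to each profile $\mathbf{P}$ a nonempty $F(\mathbf{P})\subseteq X(\mathbf{P})$. Ordinal margin graph: $\mathbb{M}(\mathbf{P})=(M,\succ)$, where $M$ is the directed graph on $X(\mathbf{P})$ with an edge $x\to y$ iff $\mathrm{Margin}_\mathbf{P}(x,y)>0$, and $\succ$ is the strict weak order on edges with $(a,b)\succ(c,d)$ iff $\mathrm{Margin}_\mathbf{P}(a,b)>\mathrm{Margin}_\mathbf{P}(c,d)$. Ordinal margin invariance: $\mathbb{M}(\mathbf{P})=\mathbb{M}(\mathbf{P}')$ implies $F(\mathbf{P})=F(\mathbf{P}')$.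 A linearly edge-ordered tournament is a pair $(M,\succ)$ where $M$ is a tournament (asymmetric directed graph in which any two distinct vertices are joined by an edge in some direction) and $\succ$ is a linear order of its edges. Single-voter resolvability: for every profile $\mathbf{P}$ with $|F(\mathbf{P})|>1$ there is a profile $\mathbf{P}'$ obtained from $\mathbf{P}$ by adding exactly one new voter with $|F(\mathbf{P}')|=1$. Asymptotic resolvability: for every positive integer $m$, as the number $n$ of voters tends to infinity, the proportion of linear profiles with $m$ (fixed) alternatives and $n$ voters for which $|F(\mathbf{P})|>1$ tends to $0$. *)

theory Defs
  imports Complex_Main
begin

text \<open>Ballots of non-voters are fixed to
the empty relation so that a profile is determined by its values on V.\<close>
type_synonym ('v, 'x) profile = "'v set \<times> 'x set \<times> ('v \<Rightarrow> ('x \<times> 'x) set)"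

definition voters :: "('v, 'x) profile \<Rightarrow> 'v set" where
  "voters P = fst P"
definition alts :: "('v, 'x) profile \<Rightarrow> 'x set" where
  "alts P = fst (snd P)"
definition ballot :: "('v, 'x) profile \<Rightarrow> 'v \<Rightarrow> ('x \<times> 'x) set" where
  "ballot P = snd (snd P)"

definition strict_weak_order_on :: "'x set \<Rightarrow> ('x \<times> 'x) set \<Rightarrow> bool" where
  "strict_weak_order_on X r \<longleftrightarrow> r \<subseteq> X \<times> X
     \<and> (\<forall>x\<in>X. (x, x) \<notin> r)
     \<and> (\<forall>x\<in>X. \<forall>y\<in>X. \<forall>z\<in>X. (x, y) \<in> r \<and> (y, z) \<in> r \<longrightarrow> (x, z) \<in> r)
     \<and> (\<forall>x\<in>X. \<forall>y\<in>X. \<forall>z\<in>X. (x, y) \<in> r \<longrightarrow> (x, z) \<in> r \<or> (z, y) \<in> r)"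

definition strict_linear_order_on :: "'x set \<Rightarrow> ('x \<times> 'x) set \<Rightarrow> bool" where
  "strict_linear_order_on X r \<longleftrightarrow> strict_weak_order_on X r
     \<and> (\<forall>x\<in>X. \<forall>y\<in>X. x \<noteq> y \<longrightarrow> (x, y) \<in> r \<or> (y, x) \<in> r)"

definition is_profile :: "('v, 'x) profile \<Rightarrow> bool" where
  "is_profile P \<longleftrightarrow> finite (voters P) \<and> voters P \<noteq> {} \<and> finite (alts P) \<and> alts P \<noteq> {}
     \<and> (\<forall>i\<in>voters P. strict_weak_order_on (alts P) (ballot P i))
     \<and> (\<forall>i. i \<notin> voters P \<longrightarrow> ballot P i = {})"

definition is_linear_profile :: "('v, 'x) profile \<Rightarrow> bool" where
  "is_linear_profile P \<longleftrightarrow> is_profile P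
     \<and> (\<forall>i\<in>voters P. strict_linear_order_on (alts P) (ballot P i))"

definition support :: "('v, 'x) profile \<Rightarrow> 'x \<Rightarrow> 'x \<Rightarrow> nat" where
  "support P a b = card {i \<in> voters P. (a, b) \<in> ballot P i}"

definition margin :: "('v, 'x) profile \<Rightarrow> 'x \<Rightarrow> 'x \<Rightarrow> int" where
  "margin P x y = int (support P x y) - int (support P y x)"

definition margin_edges :: "('v, 'x) profile \<Rightarrow> ('x \<times> 'x) set" where
  "margin_edges P = {(x, y). x \<in> alts P \<and> y \<in> alts P \<and> margin P x y > 0}"

definition ordinal_margin_graph ::
  "('v, 'x) profile \<Rightarrow> 'x set \<times> ('x \<times> 'x) set \<times> (('x \<times> 'x) \<times> ('x \<times> 'x)) set" where
  "ordinal_margin_graph P =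
     (alts P, margin_edges P,
      {((a, b), (c, d)). (a, b) \<in> margin_edges P \<and> (c, d) \<in> margin_edges P
                         \<and> margin P a b > margin P c d})"

definition linearly_edge_ordered_tournament ::
  "'x set \<times> ('x \<times> 'x) set \<times> (('x \<times> 'x) \<times> ('x \<times> 'x)) set \<Rightarrow> bool" where
  "linearly_edge_ordered_tournament G \<longleftrightarrow>
     (let X = fst G; E = fst (snd G); ord = snd (snd G) in
        E \<subseteq> X \<times> X
      \<and> (\<forall>x y. (x, y) \<in> E \<longrightarrow> (y, x) \<notin> E)
      \<and> (\<forall>x\<in>X. \<forall>y\<in>X. x \<noteq> y \<longrightarrow> (x, y) \<in> E \<or> (y, x) \<in> E)
      \<and> strict_linear_order_on E ord)"

definition voting_method :: "(('v, 'x) profile \<Rightarrow> 'x set) \<Rightarrow> bool" where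
  "voting_method F \<longleftrightarrow> (\<forall>P. is_profile P \<longrightarrow> F P \<noteq> {} \<and> F P \<subseteq> alts P)"

definition ordinal_margin_invariant :: "(('v, 'x) profile \<Rightarrow> 'x set) \<Rightarrow> bool" where
  "ordinal_margin_invariant F \<longleftrightarrow>
     (\<forall>P P'. is_profile P \<and> is_profile P' \<and> ordinal_margin_graph P = ordinal_margin_graph P'
             \<longrightarrow> F P = F P')"

definition single_voter_resolvable :: "(('v, 'x) profile \<Rightarrow> 'x set) \<Rightarrow> bool" where
  "single_voter_resolvable F \<longleftrightarrow>
     (\<forall>P. is_profile P \<and> card (F P) > 1 \<longrightarrow>
        (\<exists>i r. i \<notin> voters P \<and> strict_weak_order_on (alts P) r
               \<and> card (F (insert i (voters P), alts P, (ballot P)(i := r))) = 1))"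

definition linear_profiles :: "'v set \<Rightarrow> 'x set \<Rightarrow> ('v, 'x) profile set" where
  "linear_profiles V X = {P. is_linear_profile P \<and> voters P = V \<and> alts P = X}"

text \<open>Asymptotic resolvability: for every m > 0, every set X of m alternatives and
every enumeration of voters (the voter set for n voters being the first n of them),
the proportion of linear profiles with |F P| > 1 tends to 0 as n tends to infinity.\<close>
definition asymptotically_resolvable :: "(('v, 'x) profile \<Rightarrow> 'x set) \<Rightarrow> bool" where
  "asymptotically_resolvable F \<longleftrightarrow>
     (\<forall>m::nat. \<forall>X. \<forall>vs::nat \<Rightarrow> 'v. m > 0 \<and> finite X \<and> card X = m \<and> inj vs \<longrightarrow>
        ((\<lambda>n. real (card {P \<in> linear_profiles (vs ` {..<n}) X. card (F P) > 1})
              / real (card (linear_profiles (vs ` {..<n}) X))) \<longlonglongrightarrow> 0))"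

end

theory Submission
  imports Defs "HOL-Library.FuncSet"
begin

text \<open>
  Ordinal margin invariance makes \<open>F\<close> constant on the profiles sharing the ordinal margin
  graph of \<open>P\<close>, and for a linearly edge-ordered tournament this graph is robust: distinct margins
  differ by at least 1, so every profile whose margins are closer than \<open>t / 2\<close> to \<open>t\<close> times
  those of \<open>P\<close> has the same graph.

  Under single-voter resolvability, replicate every voter of \<open>P\<close> three times; one additional
  voter moves each margin by at most 1, so it cannot change the graph and cannot make \<open>F\<close> resolute.

  Under asymptotic resolvability, pair each linear order with its reverse. Twice the margins of
  \<open>P\<close> are an integer combination, with coefficients \<open>w p\<close>, of the margins of single linear
  orders \<open>p\<close>. A uniformly random linear ballot is a uniformly random pair together with a fair
  choice of orientation, so with probability bounded away from 0 all signed pair counts of a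
  random linear profile with \<open>n\<close> voters lie within \<open>\<rho> * sqrt n\<close> of \<open>\<mu> * w p * sqrt n\<close>:
  a Chernoff bound keeps every pair frequent, and \<open>2 ^ c \<le> 4 * sqrt c * (c choose (c div 2))\<close>
  bounds the orientation counts from below. All these profiles share the ordinal margin graph of \<open>P\<close>, so
  \<open>F\<close> fails to be resolute on a fraction of the linear profiles that does not tend to 0.
\<close>

section \<open>Central binomial coefficients\<close>

lemma Suc_times_binomial_odd_central:
  "Suc h * (Suc (2 * h) choose h) = Suc (2 * h) * (2 * h choose h)"
  using Suc_times_binomial[of h "2 * h"] binomial_symmetric[of "Suc h" "Suc (2 * h)"] by simp

lemma Suc_times_central_binomial_Suc:
  "Suc h * (2 * Suc h choose Suc h) = 2 * (2 * h + 1) * (2 * h choose h)"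
proof -
  have "Suc h * (Suc h * (2 * Suc h choose Suc h))
      = Suc (Suc (2 * h)) * (Suc h * (Suc (2 * h) choose h))"
    using Suc_times_binomial[of h "Suc (2 * h)"] by (simp del: binomial_Suc_Suc)
  also have "\<dots> = Suc h * (2 * (2 * h + 1) * (2 * h choose h))"
    unfolding Suc_times_binomial_odd_central by simp
  finally show ?thesis by (simp only: mult_left_cancel nat.distinct(1) simp_thms)
qed

lemma central_binomial_sq_lower_bound:
  assumes "1 \<le> h"
  shows "(16::real) ^ h \<le> 4 * real h * real (2 * h choose h) ^ 2"
  using assms
proof (induction h rule: nat_induct_at_least)
  case base
  then show ?case by (simp add: numeral_eq_Suc)
next
  case (Suc h)
  define a where "a = real (2 * h choose h)"
  define b where "b = real (2 * Suc h choose Suc h)"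
  define x where "x = real h"
  have rec: "(x + 1) * b = 2 * (2 * x + 1) * a"
    using arg_cong[OF Suc_times_central_binomial_Suc[of h], of real]
    unfolding a_def b_def x_def by (simp add: algebra_simps)
  have "(16::real) ^ Suc h * (x + 1) = 16 * (x + 1) * 16 ^ h" by simp
  also have "\<dots> \<le> 16 * (x + 1) * (4 * x * a ^ 2)"
    using Suc.IH unfolding a_def x_def by (intro mult_left_mono) simp_all
  also have "\<dots> \<le> 4 * (2 * (2 * x + 1) * a) ^ 2"
    by (simp add: power2_eq_square algebra_simps)
  also have "\<dots> = (4 * (x + 1) * b ^ 2) * (x + 1)"
    unfolding rec[symmetric] by (simp add: power2_eq_square algebra_simps)
  finally have "(16::real) ^ Suc h * (x + 1) \<le> (4 * (x + 1) * b ^ 2) * (x + 1)" .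
  then have "(16::real) ^ Suc h \<le> 4 * (x + 1) * b ^ 2"
    by (rule mult_right_le_imp_le) (simp add: x_def)
  then show ?case
    unfolding b_def x_def by (simp add: add.commute del: binomial_Suc_Suc)
qed

lemma binomial_le_binomial_Suc: "n choose k \<le> Suc n choose k"
  by (cases k) simp_all

lemma binomial_half_sq_lower_bound:
  assumes "1 \<le> c"
  shows "(4::real) ^ c \<le> 8 * real c * real (c choose (c div 2)) ^ 2"
proof -
  obtain h where "c = 2 * h \<or> c = Suc (2 * h)"
    by (metis dvd_mult_div_cancel odd_two_times_div_two_succ Suc_eq_plus1)
  then show ?thesis
  proof
    assume c: "c = 2 * h"
    then have "(4::real) ^ c = 16 ^ h" by (simp add: power_mult)
    also have "\<dots> \<le> 4 * real h * real (2 * h choose h) ^ 2"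
      using assms c by (intro central_binomial_sq_lower_bound) simp
    also have "\<dots> \<le> 8 * real c * real (c choose (c div 2)) ^ 2"
      using c by (simp add: mult_right_mono)
    finally show ?thesis .
  next
    assume c: "c = Suc (2 * h)"
    show ?thesis
    proof (cases "h = 0")
      case False
      have "(4::real) ^ c = 4 * 16 ^ h" by (simp add: c power_mult)
      also have "\<dots> \<le> 16 * real h * real (2 * h choose h) ^ 2"
        using central_binomial_sq_lower_bound[of h] False by simp
      also have "\<dots> \<le> 8 * real c * real (c choose (c div 2)) ^ 2"
      proof (rule mult_mono)
        show "real (2 * h choose h) ^ 2 \<le> real (c choose (c div 2)) ^ 2"
          using binomial_le_binomial_Suc[of "2 * h" h] c by (simp add: power_mono)
      qed (simp_all add: c)
      finally show ?thesis .
    qed (simp add: c)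
  qed
qed

lemma Suc_times_binomial_Suc_diff: "Suc j * (c choose Suc j) = (c - j) * (c choose j)"
  using binomial_absorb_comp[of c j] binomial_absorption[of j c] by simp

lemma binomial_geometric_lower_bound:
  assumes "c div 2 + d \<le> k" and "k \<le> c"
  shows "real (c choose (c div 2)) * (real (c - k) / real k) ^ d \<le> real (c choose (c div 2 + d))"
  using assms(1)
proof (induction d)
  case (Suc d)
  define j where "j = c div 2 + d"
  have jk: "j + 1 \<le> k" using Suc.prems unfolding j_def by simp
  have ratio: "real (c - k) / real k \<le> real (c - j) / real (Suc j)"
  proof -
    have "real c * real (Suc j) \<le> real c * real k" using jk by (intro mult_left_mono) auto
    then have "real (c - k) * real (Suc j) \<le> real (c - j) * real k"
      using jk assms(2) by (simp add: of_nat_diff algebra_simps)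
    then show ?thesis using jk by (simp add: field_simps)
  qed
  have "real (c choose (c div 2)) * (real (c - k) / real k) ^ Suc d
      = real (c - k) / real k * (real (c choose (c div 2)) * (real (c - k) / real k) ^ d)"
    by simp
  also have "\<dots> \<le> real (c - j) / real (Suc j) * real (c choose j)"
    using Suc.IH Suc.prems ratio unfolding j_def by (intro mult_mono) simp_all
  also have "\<dots> = real (c choose Suc j)"
    using arg_cong[OF Suc_times_binomial_Suc_diff[of j c], of real] by (simp add: field_simps)
  finally show ?case unfolding j_def by simp
qed simp

lemma binomial_near_half_lower_bound:
  assumes c: "4 \<le> c" and kc: "k \<le> c" and lower: "real c \<le> real (2 * k)"
    and upper: "real (2 * k) - real c \<le> sqrt (real c) / 2"
  shows "real (c choose (c div 2)) / 2 \<le> real (c choose k)"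
proof -
  define d where "d = k - c div 2"
  define D where "D = real (2 * k) - real c"
  define x where "x = real (c - k) / real k"
  have k: "c div 2 + d = k" and "0 < k" using lower c unfolding d_def by auto
  have "0 \<le> D" and D_sq: "D * D \<le> real c / 4"
    using upper lower mult_mono[OF upper upper] unfolding D_def by auto
  have "D \<le> real c / 4"
  proof -
    have "2 \<le> sqrt (real c)" using c real_sqrt_le_mono[of 4 "real c"] by simp
    then have "2 * sqrt (real c) \<le> sqrt (real c) * sqrt (real c)" by (intro mult_right_mono) auto
    then show ?thesis using upper unfolding D_def by simp
  qed
  have "2 * real d \<le> D + 1"
  proof -
    have "c \<le> 2 * (c div 2) + 1" by presburger
    then have "real c \<le> 2 * real (c div 2) + 1" by linarith
    moreover have "real k = real (c div 2) + real d" using k by (metis of_nat_add)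
    ultimately show ?thesis unfolding D_def by simp
  qed
  then have "2 * real d * D \<le> D * D + D"
    using \<open>0 \<le> D\<close> mult_right_mono[of "2 * real d" "D + 1" D] by (simp add: algebra_simps)
  then have "2 * real d * D \<le> real k" using D_sq \<open>D \<le> real c / 4\<close> lower by simp
  moreover have "1 - x = D / real k"
    unfolding x_def D_def using kc \<open>0 < k\<close> by (simp add: field_simps of_nat_diff)
  ultimately have "real d * (1 - x) \<le> 1 / 2"
    using \<open>0 < k\<close> by (simp add: pos_divide_le_eq)
  moreover have "1 + real d * (x - 1) \<le> x ^ d"
    using Bernoulli_inequality[of "x - 1" d] unfolding x_def by simp
  ultimately have "1 / 2 \<le> x ^ d" by (simp add: algebra_simps)
  then have "real (c choose (c div 2)) / 2 \<le> real (c choose (c div 2)) * x ^ d"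
    by (simp add: mult_left_mono[of "1/2" "x ^ d", simplified])
  also have "\<dots> \<le> real (c choose k)"
    using binomial_geometric_lower_bound[of c d k] k kc unfolding x_def by simp
  finally show ?thesis .
qed

lemma two_power_le_binomial_half:
  assumes "1 \<le> c"
  shows "(2::real) ^ c \<le> 4 * sqrt (real c) * real (c choose (c div 2))"
proof (rule power2_le_imp_le)
  have "((2::real) ^ c)\<^sup>2 = 4 ^ c" by (simp add: power_mult_distrib[symmetric] power2_eq_square)
  also have "\<dots> \<le> 8 * real c * real (c choose (c div 2)) ^ 2"
    using assms by (rule binomial_half_sq_lower_bound)
  also have "\<dots> \<le> (4 * sqrt (real c) * real (c choose (c div 2)))\<^sup>2"
    by (simp add: power_mult_distrib mult_right_mono)
  finally show "((2::real) ^ c)\<^sup>2 \<le> (4 * sqrt (real c) * real (c choose (c div 2)))\<^sup>2" .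
qed simp

section \<open>Subsets and assignments with prescribed counts\<close>

lemma card_window_lower_bound:
  fixes A B w :: real
  assumes A: "- real c \<le> A" and AB: "A + w \<le> B" and B: "B \<le> real c" and w: "4 \<le> w"
  shows "w / 4 \<le> real (card {k. k \<le> c \<and> A \<le> real (2 * k) - real c \<and> real (2 * k) - real c \<le> B})"
proof -
  define lo where "lo = nat \<lceil>(A + real c) / 2\<rceil>"
  define hi where "hi = nat \<lfloor>(B + real c) / 2\<rfloor>"
  have lo: "(A + real c) / 2 \<le> real lo" "real lo \<le> (A + real c) / 2 + 1"
    unfolding lo_def using A of_int_ceiling_le_add_one[of "(A + real c) / 2"]
    by (simp_all add: of_nat_nat)
  have hi: "(B + real c) / 2 - 1 \<le> real hi" "real hi \<le> (B + real c) / 2"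
    unfolding hi_def using A AB w real_of_int_floor_gt_diff_one[of "(B + real c) / 2"]
      of_int_floor_le[of "(B + real c) / 2"]
    by (simp_all add: of_nat_nat)
  have "{lo..hi} \<subseteq> {k. k \<le> c \<and> A \<le> real (2 * k) - real c \<and> real (2 * k) - real c \<le> B}"
  proof
    fix k assume "k \<in> {lo..hi}"
    then have "real lo \<le> real k" "real k \<le> real hi" by auto
    then show "k \<in> {k. k \<le> c \<and> A \<le> real (2 * k) - real c \<and> real (2 * k) - real c \<le> B}"
      using lo hi B by auto
  qed
  then have "card {lo..hi} \<le> card {k. k \<le> c \<and> A \<le> real (2 * k) - real c \<and> real (2 * k) - real c \<le> B}"
    by (intro card_mono) simp_all
  moreover have "w / 4 \<le> real (card {lo..hi})"
  proof -
    have "real lo \<le> real hi + 1" using lo hi AB w by argo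
    then have "real (card {lo..hi}) = real hi + 1 - real lo" by (simp add: of_nat_diff)
    then show ?thesis using lo hi AB w by argo
  qed
  ultimately show ?thesis by linarith
qed

lemma sum_binomial_window_lower_bound:
  fixes A B w :: real
  assumes c: "4 \<le> c" and A: "0 \<le> A" and AB: "A + w \<le> B" and B: "B \<le> sqrt (real c) / 2"
    and w: "4 \<le> w"
  shows "w / (32 * sqrt (real c)) * 2 ^ c
    \<le> (\<Sum>k | k \<le> c \<and> A \<le> real (2 * k) - real c \<and> real (2 * k) - real c \<le> B. real (c choose k))"
proof -
  define K where "K = {k. k \<le> c \<and> A \<le> real (2 * k) - real c \<and> real (2 * k) - real c \<le> B}"
  define C where "C = real (c choose (c div 2))"
  have "1 \<le> sqrt (real c)" using c by simp
  then have "sqrt (real c) * 1 \<le> sqrt (real c) * sqrt (real c)" by (intro mult_left_mono) auto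
  then have "sqrt (real c) \<le> real c" by simp
  then have "w / 4 * (C / 2) \<le> real (card K) * (C / 2)"
    unfolding K_def C_def using A AB B w
    by (intro mult_right_mono card_window_lower_bound) auto
  also have "\<dots> \<le> (\<Sum>k\<in>K. real (c choose k))"
    using A B c unfolding K_def C_def
    by (intro sum_bounded_below binomial_near_half_lower_bound) auto
  finally have "w / 4 * (C / 2) \<le> (\<Sum>k\<in>K. real (c choose k))" .
  moreover have "w / (32 * sqrt (real c)) * 2 ^ c \<le> w / 4 * (C / 2)"
  proof -
    have "0 < sqrt (real c)" using c by simp
    then show ?thesis
      using two_power_le_binomial_half[of c] c w unfolding C_def
      by (simp add: field_simps mult_left_mono)
  qed
  ultimately show ?thesis unfolding K_def by simp
qed

lemma sum_binomial_near_lower_bound: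
  fixes m h :: real
  assumes c: "4 \<le> c" and h: "4 \<le> h" and mh: "\<bar>m\<bar> + h \<le> sqrt (real c) / 2"
  shows "h / (32 * sqrt (real c)) * 2 ^ c
    \<le> (\<Sum>k | k \<le> c \<and> \<bar>real (2 * k) - real c - m\<bar> \<le> h. real (c choose k))"
proof -
  define K where "K = (\<lambda>m. {k. k \<le> c \<and> \<bar>real (2 * k) - real c - m\<bar> \<le> h})"
  have K_le: "(\<Sum>k | k \<le> c \<and> \<bar>m\<bar> \<le> real (2 * k) - real c \<and> real (2 * k) - real c \<le> \<bar>m\<bar> + h.
       real (c choose k)) \<le> (\<Sum>k\<in>K \<bar>m\<bar>. real (c choose k))"
    unfolding K_def by (intro sum_mono2) auto
  have "(\<Sum>k\<in>K \<bar>m\<bar>. real (c choose k)) = (\<Sum>k\<in>K m. real (c choose k))"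
  proof (cases "0 \<le> m")
    case False
    have mirror: "k \<in> K \<bar>m\<bar> \<longleftrightarrow> c - k \<in> K m" if "k \<le> c" for k
      using that False unfolding K_def by (auto simp: of_nat_diff)
    show ?thesis
    proof (rule sum.reindex_bij_witness[of _ "\<lambda>k. c - k" "\<lambda>k. c - k"])
      fix k assume "k \<in> K m"
      then have "k \<le> c" unfolding K_def by simp
      then show "c - (c - k) = k" "c - k \<in> K \<bar>m\<bar>" using mirror[of "c - k"] \<open>k \<in> K m\<close> by auto
    next
      fix k assume "k \<in> K \<bar>m\<bar>"
      then have "k \<le> c" unfolding K_def by simp
      then show "c - (c - k) = k" "c - k \<in> K m" "real (c choose (c - k)) = real (c choose k)"
        using mirror[of k] \<open>k \<in> K \<bar>m\<bar>\<close> by (auto simp: binomial_symmetric[symmetric])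
    qed
  qed simp
  then show ?thesis
    using sum_binomial_window_lower_bound[OF c _ _ _ h, of "\<bar>m\<bar>" "\<bar>m\<bar> + h"] mh K_le
    unfolding K_def by simp
qed

lemma card_subsets_card_eq_sum_binomial:
  assumes "finite S"
  shows "card {U. U \<subseteq> S \<and> Q (card U)} = (\<Sum>k | k \<le> card S \<and> Q k. card S choose k)"
proof -
  have "{U. U \<subseteq> S \<and> Q (card U)} = (\<Union>k\<in>{k. k \<le> card S \<and> Q k}. {U. U \<subseteq> S \<and> card U = k})"
    using assms card_mono by fastforce
  also have "card \<dots> = (\<Sum>k | k \<le> card S \<and> Q k. card {U. U \<subseteq> S \<and> card U = k})"
    using assms by (intro card_UN_disjoint) auto
  finally show ?thesis using n_subsets[OF assms] by simp
qed

lemma card_subsets_card_near_lower_bound: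
  fixes m h :: real
  assumes "finite S" and "4 \<le> card S" and "4 \<le> h" and "\<bar>m\<bar> + h \<le> sqrt (real (card S)) / 2"
  shows "h / (32 * sqrt (card S)) * 2 ^ card S
    \<le> card {U. U \<subseteq> S \<and> \<bar>real (2 * card U) - real (card S) - m\<bar> \<le> h}"
  using sum_binomial_near_lower_bound[OF assms(2-4)]
    card_subsets_card_eq_sum_binomial[OF assms(1), of "\<lambda>k. \<bar>real (2 * k) - real (card S) - m\<bar> \<le> h"]
  by simp

lemma card_subsets_partition_eq_prod:
  assumes "finite I" and "\<And>i. i \<in> I \<Longrightarrow> finite (S i)"
    and "\<And>i j. i \<in> I \<Longrightarrow> j \<in> I \<Longrightarrow> i \<noteq> j \<Longrightarrow> S i \<inter> S j = {}"
  shows "card {T. T \<subseteq> (\<Union>i\<in>I. S i) \<and> (\<forall>i\<in>I. Q i (T \<inter> S i))}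
    = (\<Prod>i\<in>I. card {U. U \<subseteq> S i \<and> Q i U})"
proof -
  have "bij_betw (\<lambda>T. \<lambda>i\<in>I. T \<inter> S i) {T. T \<subseteq> (\<Union>i\<in>I. S i) \<and> (\<forall>i\<in>I. Q i (T \<inter> S i))}
      (\<Pi>\<^sub>E i\<in>I. {U. U \<subseteq> S i \<and> Q i U})"
  proof (rule bij_betw_byWitness[where f' = "\<lambda>f. \<Union>i\<in>I. f i"])
    have glue: "(\<Union>j\<in>I. f j) \<inter> S i = f i"
      if "f \<in> (\<Pi>\<^sub>E i\<in>I. {U. U \<subseteq> S i \<and> Q i U})" "i \<in> I" for f i
      using that assms(3) unfolding PiE_iff by blast
    show "\<forall>f\<in>\<Pi>\<^sub>E i\<in>I. {U. U \<subseteq> S i \<and> Q i U}. (\<lambda>i\<in>I. (\<Union>j\<in>I. f j) \<inter> S i) = f"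
      using glue by (auto simp: fun_eq_iff PiE_iff extensional_def)
    show "(\<lambda>f. \<Union>i\<in>I. f i) ` (\<Pi>\<^sub>E i\<in>I. {U. U \<subseteq> S i \<and> Q i U})
        \<subseteq> {T. T \<subseteq> (\<Union>i\<in>I. S i) \<and> (\<forall>i\<in>I. Q i (T \<inter> S i))}"
      using glue by (fastforce simp: PiE_iff)
  qed (auto simp: PiE_iff)
  then show ?thesis
    using assms(1) by (simp add: bij_betw_same_card card_PiE)
qed

lemma sum_PiE_power_card_fibre:
  fixes z :: real
  assumes "finite L" and "p \<in> L" and "finite V"
  shows "(\<Sum>g\<in>V \<rightarrow>\<^sub>E L. z ^ card {i\<in>V. g i = p}) = (z + real (card L - 1)) ^ card V"
proof -
  have "z ^ card {i\<in>V. g i = p} = (\<Prod>i\<in>V. if g i = p then z else 1)" for g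
    using prod.inter_filter[OF assms(3), of "\<lambda>_. z" "\<lambda>i. g i = p"] by simp
  then have "(\<Sum>g\<in>V \<rightarrow>\<^sub>E L. z ^ card {i\<in>V. g i = p}) = (\<Prod>i\<in>V. \<Sum>a\<in>L. if a = p then z else 1)"
    using prod_sum_PiE[OF assms(3), of "\<lambda>_. L" "\<lambda>_ a. if a = p then z else 1"] assms(1) by simp
  also have "(\<Sum>a\<in>L. if a = p then z else 1) = z + real (card L - 1)"
    using assms(1,2) by (simp add: sum.If_cases Int_absorb1 Diff_eq[symmetric] of_nat_diff)
  finally show ?thesis by simp
qed

lemma card_PiE_small_fibre_le:
  fixes t :: real
  assumes L: "finite L" "p \<in> L" and V: "finite V" and t: "1 \<le> t"
  shows "real (card {g \<in> V \<rightarrow>\<^sub>E L. r * card {i\<in>V. g i = p} < card V})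
    \<le> (t * ((1 / t) ^ r + real (card L - 1))) ^ card V"
proof -
  define Bad where "Bad = {g \<in> V \<rightarrow>\<^sub>E L. r * card {i\<in>V. g i = p} < card V}"
  define z where "z = (1 / t) ^ r"
  \<comment> \<open>exponential moment bound: every \<open>g\<close> in \<open>Bad\<close> has weight at least 1\<close>
  have weight: "1 \<le> t ^ card V * z ^ card {i\<in>V. g i = p}" if "g \<in> Bad" for g
  proof -
    define m where "m = r * card {i\<in>V. g i = p}"
    have "m \<le> card V" using that unfolding Bad_def m_def by simp
    have "t ^ card V * z ^ card {i\<in>V. g i = p} = t ^ card V / t ^ m"
      unfolding z_def m_def by (simp add: power_mult power_divide)
    also have "\<dots> = t ^ (card V - m)" using t \<open>m \<le> card V\<close> by (simp add: power_diff)
    finally show ?thesis using t by simp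
  qed
  have "real (card Bad) = (\<Sum>g\<in>Bad. 1)" by simp
  also have "\<dots> \<le> (\<Sum>g\<in>Bad. t ^ card V * z ^ card {i\<in>V. g i = p})"
    using weight by (rule sum_mono)
  also have "\<dots> \<le> (\<Sum>g\<in>V \<rightarrow>\<^sub>E L. t ^ card V * z ^ card {i\<in>V. g i = p})"
    using L V t unfolding Bad_def z_def by (intro sum_mono2) (auto simp: finite_PiE)
  also have "\<dots> = (t * (z + real (card L - 1))) ^ card V"
    using sum_PiE_power_card_fibre[OF L V, of z]
    by (simp add: sum_distrib_left[symmetric] power_mult_distrib)
  finally show ?thesis unfolding Bad_def z_def .
qed

lemma card_PiE_balanced_ge:
  assumes L: "finite L" "L \<noteq> {}" and V: "finite V"
  shows "real (card L) ^ card V - real (card L) * (real (card L) - 1 / 2) ^ card V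
    \<le> real (card {g \<in> V \<rightarrow>\<^sub>E L. \<forall>p\<in>L. card V \<le> 12 * card L * card {i\<in>V. g i = p}})"
proof -
  define N where "N = card L"
  have N: "1 \<le> N" unfolding N_def using L by (simp add: Suc_le_eq card_gt_0_iff)
  define t where "t = 1 + 1 / (4 * real N)"
  define q where "q = real N - 1 / 2"
  have t: "1 \<le> t" unfolding t_def by simp
  have "1 + real (12 * N) * (1 / (4 * real N)) \<le> t ^ (12 * N)"
    unfolding t_def by (rule Bernoulli_inequality) (simp add: order_trans[of _ 0])
  then have "(1 / t) ^ (12 * N) \<le> 1 / 4" using N by (simp add: power_divide divide_simps)
  then have "t * ((1 / t) ^ (12 * N) + real (N - 1)) \<le> t * (1 / 4 + real (N - 1))"
    using t by (intro mult_left_mono) simp_all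
  also have "\<dots> \<le> q" unfolding t_def q_def using N by (simp add: of_nat_diff field_simps)
  finally have base: "t * ((1 / t) ^ (12 * N) + real (N - 1)) \<le> q" .
  define Good where "Good = {g \<in> V \<rightarrow>\<^sub>E L. \<forall>p\<in>L. card V \<le> 12 * card L * card {i\<in>V. g i = p}}"
  define Bad where "Bad = (\<lambda>p. {g \<in> V \<rightarrow>\<^sub>E L. 12 * N * card {i\<in>V. g i = p} < card V})"
  have bad: "real (card (Bad p)) \<le> q ^ card V" if "p \<in> L" for p
  proof -
    have "real (card (Bad p)) \<le> (t * ((1 / t) ^ (12 * N) + real (N - 1))) ^ card V"
      using card_PiE_small_fibre_le[OF L(1) that V t, of "12 * N"] unfolding Bad_def N_def by simp
    also have "\<dots> \<le> q ^ card V" using base t by (intro power_mono) simp_all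
    finally show ?thesis .
  qed
  have "V \<rightarrow>\<^sub>E L \<subseteq> Good \<union> (\<Union>p\<in>L. Bad p)"
    unfolding Good_def Bad_def N_def by (auto simp: not_le)
  then have "card (V \<rightarrow>\<^sub>E L) \<le> card Good + (\<Sum>p\<in>L. card (Bad p))"
    using V L card_mono[of "Good \<union> (\<Union>p\<in>L. Bad p)" "V \<rightarrow>\<^sub>E L"]
      card_Un_le[of Good "\<Union>p\<in>L. Bad p"] card_UN_le[of L Bad]
    unfolding Good_def Bad_def by (fastforce simp: finite_PiE)
  then have "real N ^ card V \<le> real (card Good) + (\<Sum>p\<in>L. real (card (Bad p)))"
    using V unfolding N_def by (simp add: card_PiE flip: of_nat_sum of_nat_power of_nat_add)
  also have "(\<Sum>p\<in>L. real (card (Bad p))) \<le> real N * q ^ card V"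
    using bad sum_mono[of L "\<lambda>p. real (card (Bad p))" "\<lambda>_. q ^ card V"] unfolding N_def by simp
  finally show ?thesis unfolding Good_def N_def q_def by simp
qed

lemma card_PiE_balanced_lower_bound:
  assumes L: "finite L" "L \<noteq> {}"
  shows "\<exists>n0. \<forall>V::'v set. finite V \<and> n0 \<le> card V \<longrightarrow>
    real (card L) ^ card V / 2
      \<le> real (card {g \<in> V \<rightarrow>\<^sub>E L. \<forall>p\<in>L. card V \<le> 12 * card L * card {i\<in>V. g i = p}})"
proof -
  define N where "N = card L"
  have N: "1 \<le> N" unfolding N_def using L by (simp add: Suc_le_eq card_gt_0_iff)
  have "(\<lambda>n. ((real N - 1 / 2) / real N) ^ n) \<longlonglongrightarrow> 0"
    using N by (intro LIMSEQ_power_zero) simp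
  then obtain n0 where n0: "\<And>n. n0 \<le> n \<Longrightarrow> ((real N - 1 / 2) / real N) ^ n < 1 / (2 * real N)"
    using order_tendstoD(2)[of _ 0 sequentially "1 / (2 * real N)"] N
    unfolding eventually_sequentially by fastforce
  have small: "real N * (real N - 1 / 2) ^ n \<le> real N ^ n / 2" if "n0 \<le> n" for n
  proof -
    have "real N * (real N - 1 / 2) ^ n = real N * real N ^ n * ((real N - 1 / 2) / real N) ^ n"
      using N by (simp add: power_divide)
    also have "\<dots> \<le> real N * real N ^ n * (1 / (2 * real N))"
      using n0[OF that] by (intro mult_left_mono) simp_all
    finally show ?thesis using N by simp
  qed
  show ?thesis
  proof (intro exI allI impI)
    fix V :: "'v set" assume V: "finite V \<and> n0 \<le> card V"
    then show "real (card L) ^ card V / 2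
      \<le> real (card {g \<in> V \<rightarrow>\<^sub>E L. \<forall>p\<in>L. card V \<le> 12 * card L * card {i\<in>V. g i = p}})"
      using card_PiE_balanced_ge[OF L conjunct1[OF V]] small[of "card V"] unfolding N_def by linarith
  qed
qed

section \<open>Signed counts of paired ballots\<close>

lemma card_subsets_card_near_scaled_lower_bound:
  fixes y \<rho> :: real
  assumes S: "finite S" "4 \<le> card S" and n: "card S \<le> n" "n \<le> r * card S"
    and \<rho>: "4 \<le> \<rho> * sqrt n" and y: "(\<bar>y\<bar> + \<rho>) * sqrt r \<le> 1 / 2"
  shows "\<rho> / 32 * 2 ^ card S
    \<le> real (card {U. U \<subseteq> S \<and> \<bar>real (2 * card U) - real (card S) - sqrt n * y\<bar> \<le> \<rho> * sqrt n})"
proof -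
  define c where "c = card S"
  have "0 < \<rho>"
  proof (rule ccontr)
    assume "\<not> 0 < \<rho>"
    then have "\<rho> * sqrt n \<le> 0" by (simp add: mult_nonpos_nonneg)
    then show False using \<rho> by simp
  qed
  have "sqrt n \<le> sqrt r * sqrt c"
    using n(2) unfolding c_def by (simp add: real_sqrt_mult[symmetric] flip: of_nat_mult)
  then have "(\<bar>y\<bar> + \<rho>) * sqrt n \<le> ((\<bar>y\<bar> + \<rho>) * sqrt r) * sqrt c"
    using \<open>0 < \<rho>\<close> by (simp add: mult_left_mono mult.assoc)
  also have "\<dots> \<le> 1 / 2 * sqrt c" using y by (intro mult_right_mono) simp_all
  finally have "\<bar>sqrt n * y\<bar> + \<rho> * sqrt n \<le> sqrt c / 2"
    by (simp add: abs_mult algebra_simps)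
  then have "\<rho> * sqrt n / (32 * sqrt c) * 2 ^ c
      \<le> real (card {U. U \<subseteq> S \<and> \<bar>real (2 * card U) - real c - sqrt n * y\<bar> \<le> \<rho> * sqrt n})"
    using card_subsets_card_near_lower_bound[of S "\<rho> * sqrt n" "sqrt n * y"] S \<rho>
    unfolding c_def by simp
  moreover have "\<rho> / 32 * 2 ^ c \<le> \<rho> * sqrt n / (32 * sqrt c) * 2 ^ c"
    using n(1) S(2) \<open>0 < \<rho>\<close> unfolding c_def by (simp add: field_simps mult_left_mono)
  ultimately show ?thesis unfolding c_def by linarith
qed

lemma card_subsets_fibres_near_lower_bound:
  fixes y :: "'a \<Rightarrow> real" and \<rho> :: real and V :: "'v set"
  assumes L: "finite L" and V: "finite V" and g: "g \<in> V \<rightarrow>\<^sub>E L"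
    and fibres: "\<And>p. p \<in> L \<Longrightarrow> card V \<le> r * card {i\<in>V. g i = p}" and r: "4 * r \<le> card V"
    and \<rho>: "4 \<le> \<rho> * sqrt (card V)" and y: "\<And>p. p \<in> L \<Longrightarrow> (\<bar>y p\<bar> + \<rho>) * sqrt r \<le> 1 / 2"
  shows "(\<rho> / 32) ^ card L * 2 ^ card V \<le> real (card {T. T \<subseteq> V \<and> (\<forall>p\<in>L.
    \<bar>real (2 * card (T \<inter> {i\<in>V. g i = p})) - real (card {i\<in>V. g i = p}) - sqrt (card V) * y p\<bar>
      \<le> \<rho> * sqrt (card V))})"
proof -
  define S where "S = (\<lambda>p. {i\<in>V. g i = p})"
  define n where "n = card V"
  define Q where "Q = (\<lambda>p (U :: 'v set). \<bar>real (2 * card U) - real (card (S p)) - sqrt n * y p\<bar> \<le> \<rho> * sqrt n)"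
  have V_eq: "V = (\<Union>p\<in>L. S p)" unfolding S_def using PiE_mem[OF g] by blast
  have "0 < n" using \<rho> unfolding n_def by (cases "card V") simp_all
  have "0 < \<rho>"
  proof (rule ccontr)
    assume "\<not> 0 < \<rho>"
    then have "\<rho> * sqrt n \<le> 0" by (simp add: mult_nonpos_nonneg)
    then show False using \<rho> unfolding n_def by simp
  qed
  have factor: "\<rho> / 32 * 2 ^ card (S p) \<le> real (card {U. U \<subseteq> S p \<and> Q p U})" if p: "p \<in> L" for p
  proof -
    have "n \<le> r * card (S p)" using fibres[OF p] unfolding S_def n_def .
    moreover from this have "r * 4 \<le> r * card (S p)" using r \<open>0 < n\<close> unfolding n_def by linarith
    moreover have "card (S p) \<le> n" unfolding n_def S_def using V by (intro card_mono) auto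
    ultimately show ?thesis using V \<rho> y[OF p] \<open>0 < n\<close> unfolding Q_def n_def S_def
      by (intro card_subsets_card_near_scaled_lower_bound) auto
  qed
  have "(\<rho> / 32) ^ card L * 2 ^ n = (\<Prod>p\<in>L. \<rho> / 32 * 2 ^ card (S p))"
  proof -
    have "n = (\<Sum>p\<in>L. card (S p))"
      unfolding n_def V_eq using L V by (intro card_UN_disjoint) (auto simp: S_def)
    then show ?thesis by (simp only: prod.distrib prod_constant power_sum)
  qed
  also have "\<dots> \<le> (\<Prod>p\<in>L. real (card {U. U \<subseteq> S p \<and> Q p U}))"
    using factor \<open>0 < \<rho>\<close> by (intro prod_mono) simp
  also have "\<dots> = real (card {T. T \<subseteq> V \<and> (\<forall>p\<in>L. Q p (T \<inter> S p))})"
    unfolding V_eq using L V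
    by (subst card_subsets_partition_eq_prod) (auto simp: S_def)
  finally show ?thesis unfolding Q_def S_def n_def by simp
qed

definition pair_sign :: "('a \<Rightarrow> 'a) \<Rightarrow> 'a \<Rightarrow> 'a \<Rightarrow> int" where
  "pair_sign rv s p = (if s = p then 1 else if s = rv p then -1 else 0)"

definition pair_count :: "('a \<Rightarrow> 'a) \<Rightarrow> 'v set \<Rightarrow> ('v \<Rightarrow> 'a) \<Rightarrow> 'a \<Rightarrow> int" where
  "pair_count rv V f p = (\<Sum>i\<in>V. pair_sign rv (f i) p)"

definition orient :: "'v set \<Rightarrow> ('a \<Rightarrow> 'a) \<Rightarrow> ('v \<Rightarrow> 'a) \<Rightarrow> 'v set \<Rightarrow> 'v \<Rightarrow> 'a" where
  "orient V rv g T = (\<lambda>i\<in>V. if i \<in> T then g i else rv (g i))"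

locale pairing =
  fixes L :: "'a set" and rv :: "'a \<Rightarrow> 'a"
  assumes finite_pairs: "finite L" and inj_rv: "inj_on rv L" and disjoint_rv: "rv ` L \<inter> L = {}"
begin

lemma pair_count_orient:
  assumes "finite V" and g: "g \<in> V \<rightarrow>\<^sub>E L" and "T \<subseteq> V" and p: "p \<in> L"
  shows "pair_count rv V (orient V rv g T) p
    = 2 * int (card (T \<inter> {i\<in>V. g i = p})) - int (card {i\<in>V. g i = p})"
proof -
  define S where "S = {i\<in>V. g i = p}"
  have "pair_sign rv (orient V rv g T i) p = of_bool (i \<in> S \<inter> T) - of_bool (i \<in> S - T)"
    if "i \<in> V" for i
  proof -
    have "g i \<in> L" using g that by auto
    then have "rv (g i) = rv p \<longleftrightarrow> g i = p" "rv (g i) \<noteq> p" "g i \<noteq> rv p"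
      using p inj_rv disjoint_rv by (auto dest: inj_onD)
    then show ?thesis using that unfolding pair_sign_def orient_def S_def by auto
  qed
  then have "pair_count rv V (orient V rv g T) p
      = (\<Sum>i\<in>V. of_bool (i \<in> S \<inter> T)) - (\<Sum>i\<in>V. of_bool (i \<in> S - T))"
    unfolding pair_count_def by (simp add: sum_subtractf)
  also have "\<dots> = int (card (S \<inter> T)) - int (card (S - T))"
  proof -
    have "S \<subseteq> V" unfolding S_def by auto
    then have "V \<inter> {i. i \<in> S \<inter> T} = S \<inter> T" "V \<inter> {i. i \<in> S - T} = S - T" by auto
    then show ?thesis using \<open>finite V\<close> by simp
  qed
  also have "card (S - T) = card S - card (S \<inter> T)"
    using \<open>finite V\<close> unfolding S_def by (simp add: card_Diff_subset_Int)
  finally have "pair_count rv V (orient V rv g T) p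
      = int (card (S \<inter> T)) - int (card S - card (S \<inter> T))" .
  moreover have "card (S \<inter> T) \<le> card S"
    using \<open>finite V\<close> unfolding S_def by (intro card_mono) auto
  moreover have "T \<inter> S = S \<inter> T" by blast
  ultimately show ?thesis by (simp only: S_def[symmetric] of_nat_diff)
qed

lemma orient_PiE: "g \<in> V \<rightarrow>\<^sub>E L \<Longrightarrow> orient V rv g T \<in> V \<rightarrow>\<^sub>E (L \<union> rv ` L)"
  unfolding orient_def PiE_iff by auto

lemma inj_on_orient: "inj_on (\<lambda>(g, T). orient V rv g T) ((V \<rightarrow>\<^sub>E L) \<times> Pow V)"
proof (rule inj_onI)
  fix x y assume x: "x \<in> (V \<rightarrow>\<^sub>E L) \<times> Pow V" and y: "y \<in> (V \<rightarrow>\<^sub>E L) \<times> Pow V"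
    and eq: "(\<lambda>(g, T). orient V rv g T) x = (\<lambda>(g, T). orient V rv g T) y"
  obtain g T g' T' where xy: "x = (g, T)" "y = (g', T')" by fastforce
  have g: "g \<in> V \<rightarrow>\<^sub>E L" "T \<subseteq> V" and g': "g' \<in> V \<rightarrow>\<^sub>E L" "T' \<subseteq> V"
    using x y unfolding xy by auto
  have eq': "orient V rv g T i = orient V rv g' T' i" for i
    using eq unfolding xy by simp
  have in_L: "orient V rv h U i \<in> L \<longleftrightarrow> i \<in> U" if "h \<in> V \<rightarrow>\<^sub>E L" "i \<in> V" for h U i
    using that disjoint_rv unfolding orient_def by (auto simp: PiE_iff)
  have "i \<in> T \<longleftrightarrow> i \<in> T'" if "i \<in> V" for i
    using in_L[OF g(1) that, of T] in_L[OF g'(1) that, of T'] eq'[of i] by simp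
  then have "T = T'" using g(2) g'(2) by blast
  have "g = g'"
  proof (rule PiE_ext[OF g(1) g'(1)])
    fix i assume "i \<in> V"
    then have "(if i \<in> T then g i else rv (g i)) = (if i \<in> T then g' i else rv (g' i))"
      using eq'[of i] \<open>T = T'\<close> unfolding orient_def by simp
    moreover have "g i \<in> L" "g' i \<in> L" using \<open>i \<in> V\<close> g(1) g'(1) by auto
    ultimately show "g i = g' i"
      using inj_rv by (cases "i \<in> T") (simp_all add: inj_on_eq_iff)
  qed
  then show "x = y" using xy \<open>T = T'\<close> by simp
qed

lemma sum_card_orientations_le:
  fixes m :: "'a \<Rightarrow> real" and e :: real
  assumes V: "finite V"
  shows "(\<Sum>g\<in>V \<rightarrow>\<^sub>E L. card {T. T \<subseteq> V \<and> (\<forall>p\<in>L.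
      \<bar>real (2 * card (T \<inter> {i\<in>V. g i = p})) - real (card {i\<in>V. g i = p}) - m p\<bar> \<le> e)})
    \<le> card {f \<in> V \<rightarrow>\<^sub>E (L \<union> rv ` L). \<forall>p\<in>L. \<bar>real_of_int (pair_count rv V f p) - m p\<bar> \<le> e}"
proof -
  define Ts where "Ts g = {T. T \<subseteq> V \<and> (\<forall>p\<in>L.
      \<bar>real (2 * card (T \<inter> {i\<in>V. g i = p})) - real (card {i\<in>V. g i = p}) - m p\<bar> \<le> e)}" for g
  define Near where "Near = {f \<in> V \<rightarrow>\<^sub>E (L \<union> rv ` L). \<forall>p\<in>L. \<bar>real_of_int (pair_count rv V f p) - m p\<bar> \<le> e}"
  have "orient V rv g T \<in> Near" if g: "g \<in> V \<rightarrow>\<^sub>E L" and T: "T \<in> Ts g" for g T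
  proof -
    have "T \<subseteq> V" using T unfolding Ts_def by simp
    have "\<bar>real_of_int (pair_count rv V (orient V rv g T) p) - m p\<bar> \<le> e" if "p \<in> L" for p
      using T that unfolding Ts_def pair_count_orient[OF V g \<open>T \<subseteq> V\<close> that] by simp
    then show ?thesis using orient_PiE[OF g] unfolding Near_def by simp
  qed
  then have "(\<lambda>(g, T). orient V rv g T) ` Sigma (V \<rightarrow>\<^sub>E L) Ts \<subseteq> Near" by auto
  moreover have "inj_on (\<lambda>(g, T). orient V rv g T) (Sigma (V \<rightarrow>\<^sub>E L) Ts)"
    by (rule inj_on_subset[OF inj_on_orient]) (auto simp: Ts_def)
  moreover have "finite Near" unfolding Near_def using V finite_pairs by (simp add: finite_PiE)
  ultimately have "card (Sigma (V \<rightarrow>\<^sub>E L) Ts) \<le> card Near" by (metis card_image card_mono)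
  moreover have "card (Sigma (V \<rightarrow>\<^sub>E L) Ts) = (\<Sum>g\<in>V \<rightarrow>\<^sub>E L. card (Ts g))"
    using V finite_pairs by (intro card_SigmaI) (auto simp: finite_PiE Ts_def)
  ultimately show ?thesis unfolding Ts_def Near_def by simp
qed

lemma card_PiE_pair_counts_near_lower_bound:
  fixes y :: "'a \<Rightarrow> real" and \<rho> :: real
  assumes L: "L \<noteq> {}" and \<rho>: "0 < \<rho>"
    and y: "\<And>p. p \<in> L \<Longrightarrow> (\<bar>y p\<bar> + \<rho>) * sqrt (12 * card L) \<le> 1 / 2"
  shows "\<exists>\<delta>>0. \<exists>n0. \<forall>V::'v set. finite V \<and> n0 \<le> card V \<longrightarrow>
    \<delta> * real (card (L \<union> rv ` L)) ^ card V \<le> real (card {f \<in> V \<rightarrow>\<^sub>E (L \<union> rv ` L).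
      \<forall>p\<in>L. \<bar>real_of_int (pair_count rv V f p) - sqrt (card V) * y p\<bar> \<le> \<rho> * sqrt (card V)})"
proof -
  define N where "N = card L"
  have N: "1 \<le> N" unfolding N_def using L finite_pairs by (simp add: Suc_le_eq card_gt_0_iff)
  obtain n1 where n1: "\<And>V::'v set. finite V \<Longrightarrow> n1 \<le> card V \<Longrightarrow>
      real N ^ card V / 2 \<le> real (card {g \<in> V \<rightarrow>\<^sub>E L. \<forall>p\<in>L. card V \<le> 12 * N * card {i\<in>V. g i = p}})"
    using card_PiE_balanced_lower_bound[OF finite_pairs L] unfolding N_def by blast
  have "filterlim (\<lambda>n. \<rho> * sqrt (real n)) at_top sequentially"
    by (intro filterlim_tendsto_pos_mult_at_top[OF tendsto_const \<rho>]
        filterlim_compose[OF sqrt_at_top filterlim_real_sequentially])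
  then have "\<forall>\<^sub>F n in sequentially. 4 \<le> \<rho> * sqrt (real n) \<and> max n1 (48 * N) \<le> n"
    by (simp add: filterlim_at_top eventually_ge_at_top eventually_conj)
  then obtain n0 where n0: "\<And>n. n0 \<le> n \<Longrightarrow> 4 \<le> \<rho> * sqrt (real n) \<and> max n1 (48 * N) \<le> n"
    unfolding eventually_sequentially by blast
  define \<delta> where "\<delta> = (\<rho> / 32) ^ N / 2"
  have card_pairs: "card (L \<union> rv ` L) = 2 * N"
    using finite_pairs disjoint_rv card_image[OF inj_rv] unfolding N_def
    by (simp add: card_Un_disjoint Int_commute)
  show ?thesis
  proof (intro exI conjI allI impI)
    show "0 < \<delta>" unfolding \<delta>_def using \<rho> by simp
    fix V :: "'v set" assume V: "finite V \<and> n0 \<le> card V"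
    define n where "n = card V"
    define G where "G = {g \<in> V \<rightarrow>\<^sub>E L. \<forall>p\<in>L. card V \<le> 12 * N * card {i\<in>V. g i = p}}"
    define Ts where "Ts = (\<lambda>g. {T. T \<subseteq> V \<and> (\<forall>p\<in>L. \<bar>real (2 * card (T \<inter> {i\<in>V. g i = p}))
      - real (card {i\<in>V. g i = p}) - sqrt (card V) * y p\<bar> \<le> \<rho> * sqrt (card V))})"
    have n: "4 \<le> \<rho> * sqrt n" "n1 \<le> n" "48 * N \<le> n" using n0 V unfolding n_def by auto
    have Ts: "(\<rho> / 32) ^ N * 2 ^ n \<le> real (card (Ts g))" if "g \<in> G" for g
      using card_subsets_fibres_near_lower_bound[OF finite_pairs, of V g "12 * N" \<rho> y] V n y
        \<open>g \<in> G\<close> unfolding Ts_def G_def N_def n_def by simp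
    have "\<delta> * real (card (L \<union> rv ` L)) ^ n = real N ^ n / 2 * ((\<rho> / 32) ^ N * 2 ^ n)"
      unfolding \<delta>_def card_pairs by (simp add: power_mult_distrib)
    also have "\<dots> \<le> real (card G) * ((\<rho> / 32) ^ N * 2 ^ n)"
      using n1[of V] V n \<rho> unfolding G_def n_def by (intro mult_right_mono) simp_all
    also have "\<dots> \<le> (\<Sum>g\<in>G. real (card (Ts g)))"
      using Ts sum_mono[of G "\<lambda>_. (\<rho> / 32) ^ N * 2 ^ n"] by simp
    also have "\<dots> \<le> (\<Sum>g\<in>V \<rightarrow>\<^sub>E L. real (card (Ts g)))"
      using V finite_pairs unfolding G_def by (intro sum_mono2) (auto simp: finite_PiE)
    also have "\<dots> \<le> real (card {f \<in> V \<rightarrow>\<^sub>E (L \<union> rv ` L).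
        \<forall>p\<in>L. \<bar>real_of_int (pair_count rv V f p) - sqrt (card V) * y p\<bar> \<le> \<rho> * sqrt (card V)})"
      using sum_card_orientations_le[of V "\<lambda>p. sqrt (card V) * y p" "\<rho> * sqrt (card V)"] V
      unfolding Ts_def by (simp flip: of_nat_sum)
    finally show "\<delta> * real (card (L \<union> rv ` L)) ^ card V \<le> real (card {f \<in> V \<rightarrow>\<^sub>E (L \<union> rv ` L).
        \<forall>p\<in>L. \<bar>real_of_int (pair_count rv V f p) - sqrt (card V) * y p\<bar> \<le> \<rho> * sqrt (card V)})"
      unfolding n_def .
  qed
qed

lemma sum_pair_sign_combination:
  assumes s: "s \<in> L \<union> rv ` L" and anti: "\<And>p. p \<in> L \<Longrightarrow> v (rv p) = - v p"
  shows "(\<Sum>p\<in>L. pair_sign rv s p * v p) = (v s :: int)"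
proof -
  obtain q where q: "q \<in> L" "s = q \<or> s = rv q" using s by blast
  have "pair_sign rv s p = 0" if "p \<in> L" "p \<noteq> q" for p
    using q that inj_rv disjoint_rv unfolding pair_sign_def by (auto dest: inj_onD)
  then have "(\<Sum>p\<in>L - {q}. pair_sign rv s p * v p) = 0" by (intro sum.neutral) auto
  then have "(\<Sum>p\<in>L. pair_sign rv s p * v p) = pair_sign rv s q * v q"
    using sum.remove[OF finite_pairs q(1), of "\<lambda>p. pair_sign rv s p * v p"] by simp
  then show ?thesis using q anti disjoint_rv unfolding pair_sign_def by auto
qed

lemma sum_eq_pair_count_combination:
  assumes "finite V" and f: "\<And>i. i \<in> V \<Longrightarrow> f i \<in> L \<union> rv ` L"
    and anti: "\<And>p. p \<in> L \<Longrightarrow> v (rv p) = - v p"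
  shows "(\<Sum>i\<in>V. v (f i)) = (\<Sum>p\<in>L. pair_count rv V f p * (v p :: int))"
proof -
  have "(\<Sum>i\<in>V. v (f i)) = (\<Sum>i\<in>V. \<Sum>p\<in>L. pair_sign rv (f i) p * v p)"
    using f anti by (simp add: sum_pair_sign_combination)
  also have "\<dots> = (\<Sum>p\<in>L. pair_count rv V f p * v p)"
    unfolding pair_count_def by (subst sum.swap) (simp add: sum_distrib_right)
  finally show ?thesis .
qed

lemma sum_near_pair_combination:
  fixes y :: "'a \<Rightarrow> real" and v :: "'a \<Rightarrow> int" and c e :: real
  assumes V: "finite V" and f: "\<And>i. i \<in> V \<Longrightarrow> f i \<in> L \<union> rv ` L"
    and anti: "\<And>p. p \<in> L \<Longrightarrow> v (rv p) = - v p" and bounded: "\<And>p. p \<in> L \<Longrightarrow> \<bar>v p\<bar> \<le> 1"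
    and near: "\<And>p. p \<in> L \<Longrightarrow> \<bar>real_of_int (pair_count rv V f p) - c * y p\<bar> \<le> e"
  shows "\<bar>real_of_int (\<Sum>i\<in>V. v (f i)) - c * (\<Sum>p\<in>L. y p * v p)\<bar> \<le> card L * e"
proof -
  have "real_of_int (\<Sum>i\<in>V. v (f i)) - c * (\<Sum>p\<in>L. y p * v p)
      = (\<Sum>p\<in>L. (real_of_int (pair_count rv V f p) - c * y p) * v p)"
    using sum_eq_pair_count_combination[of V f v, OF V f anti]
    by (simp add: sum_distrib_left sum_subtractf algebra_simps)
  also have "\<bar>\<dots>\<bar> \<le> (\<Sum>p\<in>L. \<bar>real_of_int (pair_count rv V f p) - c * y p\<bar> * \<bar>v p\<bar>)"
    by (rule order_trans[OF sum_abs]) (simp add: abs_mult)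
  also have "\<dots> \<le> (\<Sum>p\<in>L. e * 1)"
    using near bounded
    by (intro sum_mono mult_mono) (auto intro: order_trans[OF abs_ge_zero] simp flip: of_int_abs)
  finally show ?thesis by simp
qed

end

section \<open>Linear orders and tie-breaking\<close>

definition pref_sign :: "('x \<times> 'x) set \<Rightarrow> 'x \<Rightarrow> 'x \<Rightarrow> int" where
  "pref_sign r a b = of_bool ((a, b) \<in> r) - of_bool ((b, a) \<in> r)"

lemma pref_sign_converse [simp]: "pref_sign (r\<inverse>) a b = - pref_sign r a b"
  unfolding pref_sign_def by simp

lemma abs_pref_sign_le: "\<bar>pref_sign r a b\<bar> \<le> 1"
  unfolding pref_sign_def by simp

lemma strict_linear_order_onI:
  assumes "r \<subseteq> X \<times> X" and "\<And>x. x \<in> X \<Longrightarrow> (x, x) \<notin> r"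
    and "\<And>x y z. (x, y) \<in> r \<Longrightarrow> (y, z) \<in> r \<Longrightarrow> (x, z) \<in> r"
    and "\<And>x y. x \<in> X \<Longrightarrow> y \<in> X \<Longrightarrow> x \<noteq> y \<Longrightarrow> (x, y) \<in> r \<or> (y, x) \<in> r"
  shows "strict_linear_order_on X r"
proof -
  have "(x, z) \<in> r \<or> (z, y) \<in> r" if xy: "(x, y) \<in> r" and z: "z \<in> X" for x y z
  proof (cases "z = x")
    case False
    have "x \<in> X" using xy assms(1) by blast
    then show ?thesis using assms(3)[of z x y] assms(4)[of x z] xy z False by blast
  qed (use xy in simp)
  then show ?thesis
    unfolding strict_linear_order_on_def strict_weak_order_on_def using assms by blast
qed

lemma strict_linear_order_onD:
  assumes "strict_linear_order_on X r"
  shows "r \<subseteq> X \<times> X" and "(x, x) \<notin> r" and "(x, y) \<in> r \<Longrightarrow> (y, z) \<in> r \<Longrightarrow> (x, z) \<in> r"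
    and "x \<in> X \<Longrightarrow> y \<in> X \<Longrightarrow> x \<noteq> y \<Longrightarrow> (x, y) \<in> r \<or> (y, x) \<in> r"
  using assms unfolding strict_linear_order_on_def strict_weak_order_on_def by blast+

lemma strict_weak_order_onD:
  assumes "strict_weak_order_on X r"
  shows "r \<subseteq> X \<times> X" and "(x, x) \<notin> r" and "(x, y) \<in> r \<Longrightarrow> (y, z) \<in> r \<Longrightarrow> (x, z) \<in> r"
    and "(x, y) \<in> r \<Longrightarrow> z \<in> X \<Longrightarrow> (x, z) \<in> r \<or> (z, y) \<in> r"
  using assms unfolding strict_weak_order_on_def by blast+

lemma strict_linear_order_on_imp_weak: "strict_linear_order_on X r \<Longrightarrow> strict_weak_order_on X r"
  unfolding strict_linear_order_on_def by simp

lemma strict_linear_order_on_converse: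
  "strict_linear_order_on X r \<Longrightarrow> strict_linear_order_on X (r\<inverse>)"
  by (rule strict_linear_order_onI) (auto dest: strict_linear_order_onD)

lemma ex_strict_linear_order_on:
  assumes "finite X"
  shows "\<exists>r. strict_linear_order_on X r"
proof -
  obtain h where "bij_betw h X {0..<card X}" using ex_bij_betw_finite_nat[OF assms] by blast
  then have "h a \<noteq> h b" if "a \<in> X" "b \<in> X" "a \<noteq> b" for a b
    using that by (metis bij_betw_imp_inj_on inj_onD)
  then have "strict_linear_order_on X {(a, b). a \<in> X \<and> b \<in> X \<and> h a < h b}"
    by (intro strict_linear_order_onI) (auto simp: neq_iff)
  then show ?thesis ..
qed

definition tie_break :: "'x set \<Rightarrow> ('x \<times> 'x) set \<Rightarrow> ('x \<times> 'x) set \<Rightarrow> ('x \<times> 'x) set" where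
  "tie_break X s w = {(a, b). a \<in> X \<and> b \<in> X \<and> ((a, b) \<in> w \<or> (a, b) \<notin> w \<and> (b, a) \<notin> w \<and> (a, b) \<in> s)}"

lemma strict_linear_order_on_tie_break:
  assumes w: "strict_weak_order_on X w" and s: "strict_linear_order_on X s"
  shows "strict_linear_order_on X (tie_break X s w)"
proof (rule strict_linear_order_onI)
  note wD = strict_weak_order_onD[OF w] and sD = strict_linear_order_onD[OF s]
  show "\<And>x y. x \<in> X \<Longrightarrow> y \<in> X \<Longrightarrow> x \<noteq> y \<Longrightarrow> (x, y) \<in> tie_break X s w \<or> (y, x) \<in> tie_break X s w"
    using sD(4) unfolding tie_break_def by blast
  show "(a, c) \<in> tie_break X s w" if ab: "(a, b) \<in> tie_break X s w" and bc: "(b, c) \<in> tie_break X s w"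
    for a b c
  proof -
    have X: "a \<in> X" "b \<in> X" "c \<in> X" using ab bc unfolding tie_break_def by auto
    consider "(a, b) \<in> w" "(b, c) \<in> w"
      | "(a, b) \<in> w" "(b, c) \<notin> w" "(c, b) \<notin> w"
      | "(a, b) \<notin> w" "(b, a) \<notin> w" "(a, b) \<in> s" "(b, c) \<in> w"
      | "(a, b) \<notin> w" "(b, a) \<notin> w" "(a, b) \<in> s" "(b, c) \<notin> w" "(c, b) \<notin> w" "(b, c) \<in> s"
      using ab bc unfolding tie_break_def by auto
    then have "(a, c) \<in> w \<or> (a, c) \<notin> w \<and> (c, a) \<notin> w \<and> (a, c) \<in> s"
    proof cases
      case 1 then show ?thesis using wD(3) by blast
    next
      case 2 then show ?thesis using wD(4)[of a b c] X by blast
    next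
      case 3 then show ?thesis using wD(4)[of b c a] X by blast
    next
      case 4 then show ?thesis using wD(4)[of c a b] X sD(3)[of a b c] by blast
    qed
    then show ?thesis using X unfolding tie_break_def by simp
  qed
qed (use strict_weak_order_onD(2)[OF w] strict_linear_order_onD(2)[OF s] in \<open>auto simp: tie_break_def\<close>)

lemma pref_sign_tie_break:
  assumes w: "strict_weak_order_on X w" and s: "strict_linear_order_on X s"
  shows "pref_sign (tie_break X s w) a b + pref_sign (tie_break X (s\<inverse>) w) a b = 2 * pref_sign w a b"
proof -
  have "(a, b) \<in> w \<Longrightarrow> (b, a) \<notin> w"
    using strict_weak_order_onD(2,3)[OF w] by blast
  then show ?thesis
    using strict_weak_order_onD(1)[OF w] unfolding pref_sign_def tie_break_def by auto
qed

definition linear_orders_on :: "'x set \<Rightarrow> ('x \<times> 'x) set set" where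
  "linear_orders_on X = {r. strict_linear_order_on X r}"

lemma finite_linear_orders_on: "finite X \<Longrightarrow> finite (linear_orders_on X)"
  unfolding linear_orders_on_def
  by (rule finite_subset[of _ "Pow (X \<times> X)"]) (auto dest: strict_linear_order_onD(1))

lemma linear_orders_on_split:
  assumes X: "finite X" and x: "x \<in> X" "y \<in> X" "x \<noteq> y"
  defines "L \<equiv> {r \<in> linear_orders_on X. (x, y) \<in> r}"
  shows "pairing L converse" and "linear_orders_on X = L \<union> converse ` L" and "L \<noteq> {}"
proof -
  have lin: "r \<in> linear_orders_on X \<Longrightarrow> r\<inverse> \<in> linear_orders_on X" for r
    unfolding linear_orders_on_def using strict_linear_order_on_converse by blast
  have either: "(x, y) \<in> r \<or> (y, x) \<in> r" and not_both: "\<not> ((x, y) \<in> r \<and> (y, x) \<in> r)"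
    if "r \<in> linear_orders_on X" for r
  proof -
    have "strict_linear_order_on X r" using that unfolding linear_orders_on_def by simp
    note D = strict_linear_order_onD[OF this]
    show "(x, y) \<in> r \<or> (y, x) \<in> r" using D(4) x by blast
    show "\<not> ((x, y) \<in> r \<and> (y, x) \<in> r)" using D(2)[of x] D(3)[of x y x] by blast
  qed
  show split: "linear_orders_on X = L \<union> converse ` L"
  proof
    show "linear_orders_on X \<subseteq> L \<union> converse ` L"
    proof
      fix r assume r: "r \<in> linear_orders_on X"
      show "r \<in> L \<union> converse ` L"
      proof (cases "(x, y) \<in> r")
        case False
        then have "r\<inverse> \<in> L" using either[OF r] lin[OF r] unfolding L_def by simp
        then have "(r\<inverse>)\<inverse> \<in> converse ` L" by (rule imageI)
        then show ?thesis by simp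
      qed (use r in \<open>simp add: L_def\<close>)
    qed
    show "L \<union> converse ` L \<subseteq> linear_orders_on X" unfolding L_def using lin by blast
  qed
  show "pairing L converse"
  proof
    show "finite L" unfolding L_def using finite_linear_orders_on[OF X] by simp
    show "inj_on converse L" by (rule inj_onI) simp
    show "converse ` L \<inter> L = {}" using not_both unfolding L_def by blast
  qed
  obtain r where "r \<in> linear_orders_on X"
    using ex_strict_linear_order_on[OF X] unfolding linear_orders_on_def by blast
  then show "L \<noteq> {}" unfolding split by blast
qed

section \<open>Margins and ordinal margin graphs\<close>

lemma margin_eq_sum_pref_sign:
  "finite (voters P) \<Longrightarrow> margin P a b = (\<Sum>i\<in>voters P. pref_sign (ballot P i) a b)"
  unfolding margin_def support_def pref_sign_def by (simp add: sum_subtractf Int_def conj_commute)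

lemma profile_triple_simps [simp]:
  "voters (V, X, b) = V" "alts (V, X, b) = X" "ballot (V, X, b) = b"
  unfolding voters_def alts_def ballot_def by simp_all

definition profile_of :: "'v set \<Rightarrow> 'x set \<Rightarrow> ('v \<Rightarrow> ('x \<times> 'x) set) \<Rightarrow> ('v, 'x) profile" where
  "profile_of V X b = (V, X, \<lambda>i. if i \<in> V then b i else {})"

lemma profile_of_simps [simp]:
  "voters (profile_of V X b) = V" "alts (profile_of V X b) = X"
  "ballot (profile_of V X b) i = (if i \<in> V then b i else {})"
  unfolding profile_of_def by simp_all

lemma is_profile_profile_of:
  assumes "finite V" "V \<noteq> {}" "finite X" "X \<noteq> {}" "\<And>i. i \<in> V \<Longrightarrow> strict_weak_order_on X (b i)"
  shows "is_profile (profile_of V X b)"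
  using assms unfolding is_profile_def by simp

lemma margin_profile_of:
  "finite V \<Longrightarrow> margin (profile_of V X b) x y = (\<Sum>i\<in>V. pref_sign (b i) x y)"
  by (simp add: margin_eq_sum_pref_sign)

lemma
  assumes "is_profile P" and "i \<notin> voters P" and "strict_weak_order_on (alts P) r"
  shows is_profile_add_voter: "is_profile (insert i (voters P), alts P, (ballot P)(i := r))"
    and margin_add_voter:
      "margin (insert i (voters P), alts P, (ballot P)(i := r)) x y = margin P x y + pref_sign r x y"
proof -
  have eq: "(insert i (voters P), alts P, (ballot P)(i := r))
      = profile_of (insert i (voters P)) (alts P) ((ballot P)(i := r))"
    using assms(1) unfolding is_profile_def profile_of_def by (auto simp: fun_eq_iff)
  show "is_profile (insert i (voters P), alts P, (ballot P)(i := r))"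
    unfolding eq by (rule is_profile_profile_of) (use assms in \<open>auto simp: is_profile_def\<close>)
  have "finite (voters P)" using assms(1) unfolding is_profile_def by simp
  moreover have "(\<Sum>j\<in>voters P. pref_sign (((ballot P)(i := r)) j) x y)
      = (\<Sum>j\<in>voters P. pref_sign (ballot P j) x y)"
    using assms(2) by (intro sum.cong) auto
  ultimately show "margin (insert i (voters P), alts P, (ballot P)(i := r)) x y
      = margin P x y + pref_sign r x y"
    using assms(2) unfolding eq by (simp add: margin_profile_of margin_eq_sum_pref_sign[of P])
qed

lemma margin_self [simp]: "margin P a a = 0"
  unfolding margin_def by simp

lemma margin_swap: "margin P b a = - margin P a b"
  unfolding margin_def by simp

lemma
  assumes "linearly_edge_ordered_tournament (ordinal_margin_graph P)"
  shows tournament_margin_neq_0: "a \<in> alts P \<Longrightarrow> b \<in> alts P \<Longrightarrow> a \<noteq> b \<Longrightarrow> margin P a b \<noteq> 0"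
    and tournament_margin_inj: "(a, b) \<in> margin_edges P \<Longrightarrow> (c, d) \<in> margin_edges P \<Longrightarrow>
      margin P a b = margin P c d \<Longrightarrow> (a, b) = (c, d)"
proof -
  have tour: "\<forall>x\<in>alts P. \<forall>y\<in>alts P. x \<noteq> y \<longrightarrow> (x, y) \<in> margin_edges P \<or> (y, x) \<in> margin_edges P"
    and lin: "strict_linear_order_on (margin_edges P) {((a, b), (c, d)). (a, b) \<in> margin_edges P
      \<and> (c, d) \<in> margin_edges P \<and> margin P c d < margin P a b}"
    using assms unfolding linearly_edge_ordered_tournament_def ordinal_margin_graph_def
    by (simp_all add: Let_def)
  show "a \<in> alts P \<Longrightarrow> b \<in> alts P \<Longrightarrow> a \<noteq> b \<Longrightarrow> margin P a b \<noteq> 0"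
    using tour margin_swap[of P a b] unfolding margin_edges_def by fastforce
  show "(a, b) \<in> margin_edges P \<Longrightarrow> (c, d) \<in> margin_edges P \<Longrightarrow>
      margin P a b = margin P c d \<Longrightarrow> (a, b) = (c, d)"
    using strict_linear_order_onD(4)[OF lin, of "(a, b)" "(c, d)"] by auto
qed

lemma margin_less_if_margins_close:
  fixes t :: real
  assumes close: "\<And>a b. a \<in> alts P \<Longrightarrow> b \<in> alts P \<Longrightarrow>
      \<bar>real_of_int (margin Q a b) - t * real_of_int (margin P a b)\<bar> < t / 2"
    and less: "margin P a b < margin P c d"
    and alts: "a \<in> alts P" "b \<in> alts P" "c \<in> alts P" "d \<in> alts P"
  shows "margin Q a b < margin Q c d"
proof -
  have "0 < t" using close[OF alts(1,2)] by linarith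
  then have "t * 1 \<le> t * (real_of_int (margin P c d) - real_of_int (margin P a b))"
    using less by (intro mult_left_mono) linarith+
  then have "real_of_int (margin Q a b) < real_of_int (margin Q c d)"
    using close[OF alts(1,2)] close[OF alts(3,4)] unfolding abs_less_iff by argo
  then show ?thesis by simp
qed

lemma ordinal_margin_graph_eq_if_margins_close:
  fixes t :: real
  assumes T: "linearly_edge_ordered_tournament (ordinal_margin_graph P)" and alts: "alts Q = alts P"
    and close: "\<And>a b. a \<in> alts P \<Longrightarrow> b \<in> alts P \<Longrightarrow>
      \<bar>real_of_int (margin Q a b) - t * real_of_int (margin P a b)\<bar> < t / 2"
  shows "ordinal_margin_graph Q = ordinal_margin_graph P"
proof -
  note mono = margin_less_if_margins_close[OF close]
  have pos: "0 < margin Q a b \<longleftrightarrow> 0 < margin P a b" if ab: "a \<in> alts P" "b \<in> alts P" for a b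
  proof
    show "0 < margin P a b \<Longrightarrow> 0 < margin Q a b" using mono[of a a a b] ab by simp
    assume Q: "0 < margin Q a b"
    show "0 < margin P a b"
    proof (rule ccontr)
      assume "\<not> 0 < margin P a b"
      moreover have "margin P a b \<noteq> 0" using tournament_margin_neq_0[OF T ab] Q by (cases "a = b") auto
      ultimately show False using mono[of a b a a] ab Q by simp
    qed
  qed
  have edges: "margin_edges Q = margin_edges P"
    unfolding margin_edges_def alts using pos by blast
  have order: "margin Q c d < margin Q a b \<longleftrightarrow> margin P c d < margin P a b"
    if "(a, b) \<in> margin_edges P" "(c, d) \<in> margin_edges P" for a b c d
  proof
    have ab_cd: "a \<in> alts P" "b \<in> alts P" "c \<in> alts P" "d \<in> alts P"
      using that unfolding margin_edges_def by auto
    show "margin P c d < margin P a b \<Longrightarrow> margin Q c d < margin Q a b" using mono ab_cd by blast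
    assume Q: "margin Q c d < margin Q a b"
    show "margin P c d < margin P a b"
    proof (rule ccontr)
      assume "\<not> margin P c d < margin P a b"
      then consider "margin P a b < margin P c d" | "margin P a b = margin P c d" by linarith
      then show False
      proof cases
        case 1
        then show False using mono[of a b c d] ab_cd Q by simp
      next
        case 2
        then have "(a, b) = (c, d)" by (rule tournament_margin_inj[OF T that])
        then show False using Q by simp
      qed
    qed
  qed
  show ?thesis
    unfolding ordinal_margin_graph_def alts edges using order by blast
qed

section \<open>Resolvability\<close>

lemma ex_profile_margin_mult:
  fixes P :: "('v, 'x) profile"
  assumes inf: "infinite (UNIV :: 'v set)" and P: "is_profile P" and k: "0 < k"
  shows "\<exists>Q :: ('v, 'x) profile. is_profile Q \<and> alts Q = alts P \<and> (\<forall>a b. margin Q a b = int k * margin P a b)"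
proof -
  define V where "V = voters P"
  have V: "finite V" "V \<noteq> {}" and X: "finite (alts P)" "alts P \<noteq> {}"
    and ballots: "\<And>i. i \<in> V \<Longrightarrow> strict_weak_order_on (alts P) (ballot P i)"
    using P unfolding is_profile_def V_def by auto
  obtain W :: "'v set" where W: "finite W" "card W = card (V \<times> {..<k})"
    using infinite_arbitrarily_large[OF inf] by blast
  then obtain \<beta> where \<beta>: "bij_betw \<beta> W (V \<times> {..<k})"
    using V(1) by (metis finite_same_card_bij finite_SigmaI finite_lessThan)
  define Q where "Q = profile_of W (alts P) (\<lambda>w. ballot P (fst (\<beta> w)))"
  have "W \<noteq> {}" using W V k by (auto simp: card_cartesian_product)
  moreover have "fst (\<beta> w) \<in> V" if "w \<in> W" for w using bij_betwE[OF \<beta>] that by auto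
  ultimately have "is_profile Q" unfolding Q_def using W X ballots by (intro is_profile_profile_of) auto
  moreover have "margin Q a b = int k * margin P a b" for a b
  proof -
    define g where "g = (\<lambda>j. pref_sign (ballot P j) a b)"
    have "margin Q a b = (\<Sum>w\<in>W. g (fst (\<beta> w)))" unfolding Q_def g_def using W by (simp add: margin_profile_of)
    also have "\<dots> = (\<Sum>q\<in>V \<times> {..<k}. g (fst q))" by (rule sum.reindex_bij_betw[OF \<beta>])
    also have "\<dots> = (\<Sum>j\<in>V. \<Sum>l<k. g j)" by (simp only: sum.cartesian_product' fst_conv)
    also have "\<dots> = int k * (\<Sum>j\<in>V. g j)" by (simp add: sum_distrib_left)
    also have "(\<Sum>j\<in>V. g j) = margin P a b"
      using V(1) unfolding g_def V_def by (simp add: margin_eq_sum_pref_sign)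
    finally show ?thesis .
  qed
  moreover have "alts Q = alts P" unfolding Q_def by simp
  ultimately show ?thesis by blast
qed

lemma card_le_1_if_single_voter_resolvable:
  fixes F :: "('v, 'x) profile \<Rightarrow> 'x set"
  assumes inf: "infinite (UNIV :: 'v set)" and F: "ordinal_margin_invariant F" "single_voter_resolvable F"
    and P: "is_profile P" and T: "linearly_edge_ordered_tournament (ordinal_margin_graph P)"
  shows "card (F P) \<le> 1"
proof (rule ccontr)
  assume "\<not> card (F P) \<le> 1"
  obtain Q :: "('v, 'x) profile" where Q: "is_profile Q" "alts Q = alts P"
    and margin_Q: "\<And>a b. margin Q a b = 3 * margin P a b"
    using ex_profile_margin_mult[OF inf P, of 3] by auto
  have "ordinal_margin_graph Q = ordinal_margin_graph P"
    using T Q(2) margin_Q by (intro ordinal_margin_graph_eq_if_margins_close[where t = 3]) simp_all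
  then have "F Q = F P" using F(1) Q(1) P unfolding ordinal_margin_invariant_def by blast
  then have "1 < card (F Q)" using \<open>\<not> card (F P) \<le> 1\<close> by simp
  then obtain i r where i: "i \<notin> voters Q" and r: "strict_weak_order_on (alts Q) r"
    and resolved: "card (F (insert i (voters Q), alts Q, (ballot Q)(i := r))) = 1"
    using F(2) Q(1) unfolding single_voter_resolvable_def by blast
  define Q' where "Q' = (insert i (voters Q), alts Q, (ballot Q)(i := r))"
  have "is_profile Q'" unfolding Q'_def using Q(1) i r by (rule is_profile_add_voter)
  moreover have "ordinal_margin_graph Q' = ordinal_margin_graph P"
  proof (rule ordinal_margin_graph_eq_if_margins_close[where t = 3])
    fix a b
    have "margin Q' a b = 3 * margin P a b + pref_sign r a b"
      unfolding Q'_def using margin_add_voter[OF Q(1) i r] margin_Q by simp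
    then show "\<bar>real_of_int (margin Q' a b) - 3 * real_of_int (margin P a b)\<bar> < 3 / 2"
      using abs_pref_sign_le[of r a b] by simp
  qed (use T Q(2) in \<open>simp_all add: Q'_def\<close>)
  ultimately have "F Q' = F P" using F(1) P unfolding ordinal_margin_invariant_def by blast
  then show False using resolved \<open>\<not> card (F P) \<le> 1\<close> unfolding Q'_def by simp
qed

lemma inj_on_profile_of: "inj_on (profile_of V X) (V \<rightarrow>\<^sub>E A)"
proof (rule inj_onI)
  fix f g assume f: "f \<in> V \<rightarrow>\<^sub>E A" and g: "g \<in> V \<rightarrow>\<^sub>E A" and eq: "profile_of V X f = profile_of V X g"
  show "f = g"
  proof (rule PiE_ext[OF f g])
    fix i assume "i \<in> V"
    then show "f i = g i" using arg_cong[OF eq, of "\<lambda>Q. ballot Q i"] by simp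
  qed
qed

lemma linear_profiles_eq_image:
  assumes V: "finite V" "V \<noteq> {}" and X: "finite X" "X \<noteq> {}"
  shows "linear_profiles V X = profile_of V X ` (V \<rightarrow>\<^sub>E linear_orders_on X)"
proof
  show "profile_of V X ` (V \<rightarrow>\<^sub>E linear_orders_on X) \<subseteq> linear_profiles V X"
  proof (rule image_subsetI)
    fix f assume "f \<in> V \<rightarrow>\<^sub>E linear_orders_on X"
    then have lin: "\<And>i. i \<in> V \<Longrightarrow> strict_linear_order_on X (f i)"
      unfolding linear_orders_on_def by auto
    then have "is_profile (profile_of V X f)"
      using assms strict_linear_order_on_imp_weak by (intro is_profile_profile_of) auto
    then show "profile_of V X f \<in> linear_profiles V X"
      using lin unfolding linear_profiles_def is_linear_profile_def by simp
  qed
  show "linear_profiles V X \<subseteq> profile_of V X ` (V \<rightarrow>\<^sub>E linear_orders_on X)"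
  proof
    fix Q assume "Q \<in> linear_profiles V X"
    then have Q: "voters Q = V" "alts Q = X" "is_profile Q" "\<forall>i\<in>V. strict_linear_order_on X (ballot Q i)"
      unfolding linear_profiles_def is_linear_profile_def by auto
    have "Q = profile_of V X (restrict (ballot Q) V)"
      using Q unfolding profile_of_def is_profile_def voters_def alts_def ballot_def
      by (auto simp: fun_eq_iff prod_eq_iff)
    moreover have "restrict (ballot Q) V \<in> V \<rightarrow>\<^sub>E linear_orders_on X"
      using Q(4) unfolding linear_orders_on_def by simp
    ultimately show "Q \<in> profile_of V X ` (V \<rightarrow>\<^sub>E linear_orders_on X)" by blast
  qed
qed

lemma card_linear_profiles:
  assumes "finite V" "V \<noteq> {}" "finite X" "X \<noteq> {}"
  shows "card (linear_profiles V X) = card (linear_orders_on X) ^ card V"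
  unfolding linear_profiles_eq_image[OF assms]
  using assms(1) by (simp add: card_image[OF inj_on_profile_of] card_PiE)

lemma ex_pair_combination_eq_twice_margin:
  assumes P: "is_profile P" and L: "pairing L converse"
    and split: "linear_orders_on (alts P) = L \<union> converse ` L"
  shows "\<exists>w :: ('x \<times> 'x) set \<Rightarrow> int. \<forall>a b. (\<Sum>p\<in>L. w p * pref_sign p a b) = 2 * margin P a b"
proof -
  interpret pairing L converse by (rule L)
  define V where "V = voters P"
  define X where "X = alts P"
  have V: "finite V" and X: "finite X" and ballots: "\<And>i. i \<in> V \<Longrightarrow> strict_weak_order_on X (ballot P i)"
    using P unfolding is_profile_def V_def X_def by auto
  obtain s where s: "strict_linear_order_on X s" using ex_strict_linear_order_on[OF X] by blast
  define f1 where "f1 = (\<lambda>i. tie_break X s (ballot P i))"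
  define f2 where "f2 = (\<lambda>i. tie_break X (s\<inverse>) (ballot P i))"
  have f: "f1 i \<in> L \<union> converse ` L" "f2 i \<in> L \<union> converse ` L" if "i \<in> V" for i
    using strict_linear_order_on_tie_break[OF ballots[OF that]] s strict_linear_order_on_converse[OF s]
    unfolding f1_def f2_def split[folded X_def, symmetric] linear_orders_on_def by auto
  show ?thesis
  proof (intro exI allI)
    fix a b
    have "2 * margin P a b = (\<Sum>i\<in>V. pref_sign (f1 i) a b) + (\<Sum>i\<in>V. pref_sign (f2 i) a b)"
      using V ballots s unfolding f1_def f2_def V_def
      by (simp add: margin_eq_sum_pref_sign pref_sign_tie_break sum_distrib_left flip: sum.distrib)
    also have "\<dots> = (\<Sum>p\<in>L. (pair_count converse V f1 p + pair_count converse V f2 p) * pref_sign p a b)"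
      using sum_eq_pair_count_combination[of V f1 "\<lambda>p. pref_sign p a b"]
        sum_eq_pair_count_combination[of V f2 "\<lambda>p. pref_sign p a b"] V f
      by (simp add: distrib_right sum.distrib)
    finally show "(\<Sum>p\<in>L. (pair_count converse V f1 p + pair_count converse V f2 p) * pref_sign p a b)
      = 2 * margin P a b" ..
  qed
qed

lemma ordinal_margin_graph_eq_if_pair_counts_near:
  fixes w :: "('x \<times> 'x) set \<Rightarrow> int" and \<mu> \<rho> :: real
  assumes T: "linearly_edge_ordered_tournament (ordinal_margin_graph P)" and L: "pairing L converse"
    and V: "finite V" "V \<noteq> {}" and f: "\<And>i. i \<in> V \<Longrightarrow> f i \<in> L \<union> converse ` L"
    and w: "\<And>a b. (\<Sum>p\<in>L. w p * pref_sign p a b) = 2 * margin P a b"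
    and \<mu>: "0 < \<mu>" and \<rho>: "real (card L) * \<rho> < \<mu>"
    and near: "\<And>p. p \<in> L \<Longrightarrow>
      \<bar>real_of_int (pair_count converse V f p) - sqrt (card V) * (\<mu> * w p)\<bar> \<le> \<rho> * sqrt (card V)"
  shows "ordinal_margin_graph (profile_of V (alts P) f) = ordinal_margin_graph P"
proof -
  interpret pairing L converse by (rule L)
  define s where "s = sqrt (card V)"
  have s: "0 < s" unfolding s_def using V by (simp add: card_gt_0_iff)
  show ?thesis
  proof (rule ordinal_margin_graph_eq_if_margins_close[where t = "2 * \<mu> * s"])
    fix a b
    have "\<bar>real_of_int (\<Sum>i\<in>V. pref_sign (f i) a b) - s * (\<Sum>p\<in>L. \<mu> * w p * pref_sign p a b)\<bar>
        \<le> real (card L) * (\<rho> * s)"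
      using near unfolding s_def
      by (intro sum_near_pair_combination[OF V(1) f]) (simp_all add: abs_pref_sign_le)
    also have "\<dots> < \<mu> * s" using \<rho> s by (simp add: mult.assoc[symmetric])
    also have "(\<Sum>p\<in>L. \<mu> * w p * pref_sign p a b) = \<mu> * real_of_int (\<Sum>p\<in>L. w p * pref_sign p a b)"
      by (simp add: sum_distrib_left mult.assoc)
    also have "real_of_int (\<Sum>i\<in>V. pref_sign (f i) a b) = real_of_int (margin (profile_of V (alts P) f) a b)"
      using V(1) by (simp add: margin_profile_of)
    finally show "\<bar>real_of_int (margin (profile_of V (alts P) f) a b) - 2 * \<mu> * s * real_of_int (margin P a b)\<bar>
        < 2 * \<mu> * s / 2"
      unfolding w by (simp add: algebra_simps)
  qed (use T \<mu> s in simp_all)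
qed

lemma card_pair_counts_near_le_card_same_graph:
  fixes w :: "('x \<times> 'x) set \<Rightarrow> int" and \<mu> \<rho> :: real
  assumes P: "is_profile P" and T: "linearly_edge_ordered_tournament (ordinal_margin_graph P)"
    and L: "pairing L converse" and split: "linear_orders_on (alts P) = L \<union> converse ` L"
    and V: "finite V" "V \<noteq> {}" and w: "\<And>a b. (\<Sum>p\<in>L. w p * pref_sign p a b) = 2 * margin P a b"
    and \<mu>: "0 < \<mu>" and \<rho>: "real (card L) * \<rho> < \<mu>"
  shows "card {f \<in> V \<rightarrow>\<^sub>E (L \<union> converse ` L).
      \<forall>p\<in>L. \<bar>real_of_int (pair_count converse V f p) - sqrt (card V) * (\<mu> * w p)\<bar> \<le> \<rho> * sqrt (card V)}
    \<le> card {Q \<in> linear_profiles V (alts P). ordinal_margin_graph Q = ordinal_margin_graph P}"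
    (is "card ?Near \<le> card ?Same")
proof -
  have X: "finite (alts P)" "alts P \<noteq> {}" using P unfolding is_profile_def by auto
  have "profile_of V (alts P) f \<in> ?Same" if f: "f \<in> ?Near" for f
  proof -
    have "profile_of V (alts P) f \<in> linear_profiles V (alts P)"
      using f linear_profiles_eq_image[OF V X] split by auto
    moreover have "ordinal_margin_graph (profile_of V (alts P) f) = ordinal_margin_graph P"
      using f by (intro ordinal_margin_graph_eq_if_pair_counts_near[OF T L V _ w \<mu> \<rho>]) auto
    ultimately show ?thesis by simp
  qed
  moreover have "finite ?Same"
    unfolding linear_profiles_eq_image[OF V X] using V finite_linear_orders_on[OF X(1)]
    by (simp add: finite_PiE)
  moreover have "inj_on (profile_of V (alts P)) ?Near"
    by (rule inj_on_subset[OF inj_on_profile_of]) auto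
  ultimately show ?thesis by (metis (no_types, lifting) card_inj_on_le image_subsetI)
qed

lemma ex_scale_and_tolerance:
  fixes w :: "'a \<Rightarrow> int"
  assumes "finite L" and "L \<noteq> {}"
  shows "\<exists>\<mu> \<rho>. 0 < \<mu> \<and> 0 < \<rho> \<and> real (card L) * \<rho> < \<mu>
    \<and> (\<forall>p\<in>L. (\<bar>\<mu> * w p\<bar> + \<rho>) * sqrt (12 * card L) \<le> 1 / 2)"
proof -
  define N where "N = card L"
  have N: "1 \<le> N" unfolding N_def using assms by (simp add: Suc_le_eq card_gt_0_iff)
  define B where "B = 1 + (\<Sum>p\<in>L. \<bar>real_of_int (w p)\<bar>)"
  define \<mu> where "\<mu> = 1 / (4 * B * sqrt (12 * N))"
  define \<rho> where "\<rho> = \<mu> / (2 * N)"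
  have B: "1 \<le> B" unfolding B_def by (simp add: sum_nonneg)
  have \<mu>: "0 < \<mu>" and \<rho>: "0 < \<rho>" "real N * \<rho> < \<mu>"
    using B N unfolding \<mu>_def \<rho>_def by (simp_all add: field_simps)
  have "(\<bar>\<mu> * w p\<bar> + \<rho>) * sqrt (12 * N) \<le> 1 / 2" if "p \<in> L" for p
  proof -
    have "\<bar>real_of_int (w p)\<bar> \<le> B"
      using member_le_sum[OF that, of "\<lambda>p. \<bar>real_of_int (w p)\<bar>"] assms(1) unfolding B_def by simp
    then have "\<bar>\<mu> * w p\<bar> \<le> \<mu> * B" using \<mu> by (simp add: abs_mult mult_left_mono)
    moreover have "1 * \<rho> \<le> real N * \<rho>" using N \<rho>(1) by (intro mult_right_mono) simp_all
    moreover have "\<mu> * 1 \<le> \<mu> * B" using B \<mu> by (intro mult_left_mono) simp_all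
    ultimately have "\<bar>\<mu> * w p\<bar> + \<rho> \<le> 2 * (\<mu> * B)" using \<rho>(2) by simp
    then have "(\<bar>\<mu> * w p\<bar> + \<rho>) * sqrt (12 * N) \<le> 2 * (\<mu> * B) * sqrt (12 * N)"
      by (intro mult_right_mono) simp_all
    also have "\<dots> = 1 / 2" unfolding \<mu>_def using B N by simp
    finally show ?thesis .
  qed
  then show ?thesis using \<mu> \<rho> unfolding N_def by blast
qed

lemma density_same_ordinal_margin_graph:
  fixes P :: "('v, 'x) profile"
  assumes P: "is_profile P" and T: "linearly_edge_ordered_tournament (ordinal_margin_graph P)"
    and two: "2 \<le> card (alts P)"
  shows "\<exists>\<delta>>0. \<exists>n0. \<forall>V::'v set. finite V \<and> n0 \<le> card V \<longrightarrow>
    \<delta> \<le> real (card {Q \<in> linear_profiles V (alts P). ordinal_margin_graph Q = ordinal_margin_graph P})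
      / real (card (linear_profiles V (alts P)))"
proof -
  define X where "X = alts P"
  have X: "finite X" "X \<noteq> {}" using P unfolding is_profile_def X_def by auto
  obtain x y where xy: "x \<in> X" "y \<in> X" "x \<noteq> y"
    using two X(1) card_le_Suc0_iff_eq[of X] unfolding X_def by fastforce
  define L where "L = {r \<in> linear_orders_on X. (x, y) \<in> r}"
  have L: "pairing L converse" "linear_orders_on X = L \<union> converse ` L" "L \<noteq> {}"
    using linear_orders_on_split[OF X(1) xy] unfolding L_def by auto
  interpret pairing L converse by (rule L(1))
  obtain w :: "('x \<times> 'x) set \<Rightarrow> int" where w: "\<And>a b. (\<Sum>p\<in>L. w p * pref_sign p a b) = 2 * margin P a b"
    using ex_pair_combination_eq_twice_margin[OF P L(1)] L(2) unfolding X_def by blast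
  obtain \<mu> \<rho> where \<mu>: "0 < \<mu>" and \<rho>: "0 < \<rho>" "real (card L) * \<rho> < \<mu>"
    and target: "\<And>p. p \<in> L \<Longrightarrow> (\<bar>\<mu> * w p\<bar> + \<rho>) * sqrt (12 * card L) \<le> 1 / 2"
    using ex_scale_and_tolerance[OF finite_pairs L(3), of w] by blast
  obtain \<delta> n0 where \<delta>: "0 < \<delta>" and box: "\<And>V::'v set. finite V \<Longrightarrow> n0 \<le> card V \<Longrightarrow>
      \<delta> * real (card (L \<union> converse ` L)) ^ card V \<le> real (card {f \<in> V \<rightarrow>\<^sub>E (L \<union> converse ` L).
        \<forall>p\<in>L. \<bar>real_of_int (pair_count converse V f p) - sqrt (card V) * (\<mu> * w p)\<bar> \<le> \<rho> * sqrt (card V)})"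
    using card_PiE_pair_counts_near_lower_bound[OF L(3) \<rho>(1), of "\<lambda>p. \<mu> * w p"] target by blast
  show ?thesis
  proof (intro exI conjI allI impI)
    fix V :: "'v set" assume "finite V \<and> max n0 1 \<le> card V"
    then have V: "finite V" "V \<noteq> {}" "n0 \<le> card V" by auto
    have card_lin: "card (linear_profiles V X) = card (L \<union> converse ` L) ^ card V"
      using card_linear_profiles[OF V(1,2) X] L(2) by simp
    then have "0 < card (linear_profiles V X)"
      using finite_pairs L(3) by (simp add: card_gt_0_iff)
    then show "\<delta> \<le> real (card {Q \<in> linear_profiles V (alts P).
        ordinal_margin_graph Q = ordinal_margin_graph P}) / real (card (linear_profiles V (alts P)))"
      using box[OF V(1,3)] card_pair_counts_near_le_card_same_graph[OF P T L(1) L(2)[unfolded X_def] V(1,2) w \<mu> \<rho>(2)]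
      unfolding card_lin[unfolded X_def] X_def by (simp add: pos_le_divide_eq)
  qed (rule \<delta>)
qed

lemma card_le_1_if_asymptotically_resolvable:
  fixes F :: "('v, 'x) profile \<Rightarrow> 'x set"
  assumes inf: "infinite (UNIV :: 'v set)"
    and F: "voting_method F" "ordinal_margin_invariant F" "asymptotically_resolvable F"
    and P: "is_profile P" and T: "linearly_edge_ordered_tournament (ordinal_margin_graph P)"
  shows "card (F P) \<le> 1"
proof (rule ccontr)
  assume many: "\<not> card (F P) \<le> 1"
  define X where "X = alts P"
  have "F P \<subseteq> X" using F(1) P unfolding voting_method_def X_def by blast
  moreover have X: "finite X" using P unfolding is_profile_def X_def by simp
  ultimately have two: "2 \<le> card X" using card_mono[of X "F P"] many by linarith
  obtain \<delta> n0 where \<delta>: "0 < \<delta>" and dense: "\<And>V::'v set. finite V \<Longrightarrow> n0 \<le> card V \<Longrightarrow>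
      \<delta> \<le> real (card {Q \<in> linear_profiles V X. ordinal_margin_graph Q = ordinal_margin_graph P})
        / real (card (linear_profiles V X))"
    using density_same_ordinal_margin_graph[OF P T two[unfolded X_def]] unfolding X_def by blast
  obtain vs :: "nat \<Rightarrow> 'v" where vs: "inj vs" using infinite_countable_subset[OF inf] by blast
  have "(\<lambda>n. real (card {Q \<in> linear_profiles (vs ` {..<n}) X. 1 < card (F Q)})
      / real (card (linear_profiles (vs ` {..<n}) X))) \<longlonglongrightarrow> 0"
    using F(3)[unfolded asymptotically_resolvable_def, rule_format, of "card X" X vs] X two vs by simp
  from order_tendstoD(2)[OF this \<delta>] obtain n1 where small: "\<And>n. n1 \<le> n \<Longrightarrow>
      real (card {Q \<in> linear_profiles (vs ` {..<n}) X. 1 < card (F Q)})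
      / real (card (linear_profiles (vs ` {..<n}) X)) < \<delta>"
    unfolding eventually_sequentially by blast
  define n where "n = max n0 n1"
  define V where "V = vs ` {..<n}"
  have "card V = n" unfolding V_def using inj_on_subset[OF vs] by (simp add: card_image)
  then have same: "\<delta> \<le> real (card {Q \<in> linear_profiles V X. ordinal_margin_graph Q = ordinal_margin_graph P})
      / real (card (linear_profiles V X))"
    using dense[of V] unfolding V_def n_def by simp
  then have "finite (linear_profiles V X)" using \<delta> card.infinite by fastforce
  moreover have "1 < card (F Q)"
    if "Q \<in> linear_profiles V X" and "ordinal_margin_graph Q = ordinal_margin_graph P" for Q
  proof -
    have "is_profile Q" using that(1) unfolding linear_profiles_def is_linear_profile_def by blast
    then have "F Q = F P" using F(2) P that(2) unfolding ordinal_margin_invariant_def by blast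
    then show ?thesis using many by simp
  qed
  ultimately have "real (card {Q \<in> linear_profiles V X. ordinal_margin_graph Q = ordinal_margin_graph P})
      / real (card (linear_profiles V X))
    \<le> real (card {Q \<in> linear_profiles V X. 1 < card (F Q)}) / real (card (linear_profiles V X))"
    by (intro divide_right_mono) (auto intro!: card_mono)
  then show False using same small[of n] unfolding V_def n_def by simp
qed

theorem lemma2:
  fixes F :: "('v, 'x) profile \<Rightarrow> 'x set" and P :: "('v, 'x) profile"
  assumes "infinite (UNIV :: 'x set)" and "infinite (UNIV :: 'v set)"
    and "voting_method F"
    and "ordinal_margin_invariant F"
    and "single_voter_resolvable F \<or> asymptotically_resolvable F"
    and "is_profile P"
    and "linearly_edge_ordered_tournament (ordinal_margin_graph P)"
  shows "card (F P) = 1"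
proof -
  have "F P \<noteq> {}" and "F P \<subseteq> alts P" using assms(3,6) unfolding voting_method_def by blast+
  moreover have "finite (alts P)" using assms(6) unfolding is_profile_def by simp
  ultimately have "0 < card (F P)" by (simp add: card_gt_0_iff finite_subset)
  moreover have "card (F P) \<le> 1"
    using assms(5) card_le_1_if_single_voter_resolvable[OF assms(2,4) _ assms(6,7)]
      card_le_1_if_asymptotically_resolvable[OF assms(2,3,4) _ assms(6,7)] by blast
  ultimately show ?thesis by simp
qed

end
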